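(* Let $q\in(0,1)$ and $s\in[0,1]$. Let $H=\mathcal{O}(SU_q(2))$ be the Hopf $*$-algebra generated by $\alpha,\gamma$ with relations $$\alpha\gamma=q\gamma\alpha,\quad \alpha\gamma^*=q\gamma^*\alpha,\quad \gamma\gamma^*=\gamma^*\gamma,\quad \alpha^*\alpha+\gamma^*\gamma=1,\quad \alpha\alpha^*+q^2\gamma\gamma^*=1,$$ and counit $\varepsilon(\alpha)=1$, $\varepsilon(\gamma)=0$. Let $B=\mathcal{O}(S^2_{q,s})\subseteq H$ be the $*$-subalgebra generated by $$K=s(\gamma\alpha+\alpha^*\gamma^* )+(1-s^2)\gamma^*\gamma,\qquad L=s(\alpha^2-q\gamma^{*2})+(1-s^2)\alpha\gamma^*.$$ Let $\{e_n\}_{n\ge0}$ be an orthonormal basis of a separable Hilbert space (with $e_{-1}:=0$) and $\pi_\pm$ the bounded $*$-representations of $B$ given by $$\pi_-(K)e_n=-s^2q^{2n}e_n,\quad \pi_-(L)e_n=s\sqrt{1-(1-s^2)q^{2n}-s^2q^{4n}}\;e_{n-1},$$ $$\pi_+(K)e_n=q^{2n}e_n,\quad \pi_+(L)e_n=\sqrt{s^2+(1-s^2)q^{2n}-q^{4n}}\;e_{n-1};$$ then $\mathrm{tr}_\pi:=\mathrm{Tr}\circ(\pi_--\pi_+)$ is a well-defined trace on $B$. Then the image of the positive cone of $K_0(B)$ (the classes of finitely generated projective left $B$-modules) under the group homomorphism $$(\varepsilon,\mathrm{tr}_\pi):K_0(B)\to\mathbb{Z}\times\mathbb{Z},\qquad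 [M]\mapsto(\langle\varepsilon,[M]\rangle,\langle\mathrm{tr}_\pi,[M]\rangle)$$ contains $\mathbb{Z}_+\times\mathbb{Z}$, where $\mathbb{Z}_+=\{1,2,3,\dots\}$ and $\varepsilon$ is restricted to $B$.
   Context: $\mathrm{Tr}$ denotes the operator trace. For a trace $\tau$ on $B$ (e.g. the character $\varepsilon|_B$ or $\mathrm{tr}_\pi$) and a finitely generated projective left $B$-module $M\cong B^nE$ with $E=(E_{ij})\in M_n(B)$ idempotent, $\langle\tau,[M]\rangle:=\sum_{i=1}^n\tau(E_{ii})$; this depends only on $[M]\in K_0(B)$, and both pairings take integer values. *)

theory Defs
  imports "HOL-Analysis.Analysis"
begin

text \<open>An element of the free algebra is a finitely supported coefficient function on words.\<close>
type_synonym 'g ncpoly = "'g list \<Rightarrow> complex"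

definition fin_supp :: "'g ncpoly \<Rightarrow> bool" where
  "fin_supp p \<longleftrightarrow> finite {w. p w \<noteq> 0}"

definition nc_zero :: "'g ncpoly" where "nc_zero = (\<lambda>w. 0)"
definition nc_const :: "complex \<Rightarrow> 'g ncpoly" where
  "nc_const c = (\<lambda>w. if w = [] then c else 0)"
definition nc_mono :: "'g list \<Rightarrow> 'g ncpoly" where
  "nc_mono u = (\<lambda>w. if w = u then 1 else 0)"
definition nc_add :: "'g ncpoly \<Rightarrow> 'g ncpoly \<Rightarrow> 'g ncpoly" where
  "nc_add p r = (\<lambda>w. p w + r w)"
definition nc_smult :: "complex \<Rightarrow> 'g ncpoly \<Rightarrow> 'g ncpoly" where
  "nc_smult c p = (\<lambda>w. c * p w)"
definition nc_sub :: "'g ncpoly \<Rightarrow> 'g ncpoly \<Rightarrow> 'g ncpoly" where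
  "nc_sub p r = (\<lambda>w. p w - r w)"
definition nc_mult :: "'g ncpoly \<Rightarrow> 'g ncpoly \<Rightarrow> 'g ncpoly" where
  "nc_mult p r = (\<lambda>w. \<Sum>i\<le>length w. p (take i w) * r (drop i w))"
definition nc_star :: "('g \<Rightarrow> 'g) \<Rightarrow> 'g ncpoly \<Rightarrow> 'g ncpoly" where
  "nc_star iv p = (\<lambda>w. cnj (p (rev (map iv w))))"

datatype hgen = Al | AlS | Ga | GaS

fun hstar :: "hgen \<Rightarrow> hgen" where
  "hstar Al = AlS" | "hstar AlS = Al" | "hstar Ga = GaS" | "hstar GaS = Ga"

definition suq_rels0 :: "real \<Rightarrow> hgen ncpoly set" where
  "suq_rels0 q = {
     nc_sub (nc_mono [Al,Ga]) (nc_smult (complex_of_real q) (nc_mono [Ga,Al])),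
     nc_sub (nc_mono [Al,GaS]) (nc_smult (complex_of_real q) (nc_mono [GaS,Al])),
     nc_sub (nc_mono [Ga,GaS]) (nc_mono [GaS,Ga]),
     nc_sub (nc_add (nc_mono [AlS,Al]) (nc_mono [GaS,Ga])) (nc_const 1),
     nc_sub (nc_add (nc_mono [Al,AlS]) (nc_smult (complex_of_real (q^2)) (nc_mono [Ga,GaS]))) (nc_const 1)}"

text \<open>Since the relations hold in a *-algebra, their adjoints hold as well.\<close>
definition suq_rels :: "real \<Rightarrow> hgen ncpoly set" where
  "suq_rels q = suq_rels0 q \<union> nc_star hstar ` suq_rels0 q"

text \<open>Two-sided ideal of the free algebra generated by the relations; H = free algebra / ideal.\<close>
inductive_set suq_ideal :: "real \<Rightarrow> hgen ncpoly set" for q :: real where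
  zero: "nc_zero \<in> suq_ideal q"
| add: "x \<in> suq_ideal q \<Longrightarrow> y \<in> suq_ideal q \<Longrightarrow> nc_add x y \<in> suq_ideal q"
| gen: "r \<in> suq_rels q \<Longrightarrow>
          nc_smult c (nc_mult (nc_mult (nc_mono u) r) (nc_mono v)) \<in> suq_ideal q"

text \<open>Counit: the algebra homomorphism with alpha, alpha* |-> 1 and gamma, gamma* |-> 0
  (well defined on the quotient).\<close>
fun eps_gen :: "hgen \<Rightarrow> complex" where
  "eps_gen Al = 1" | "eps_gen AlS = 1" | "eps_gen Ga = 0" | "eps_gen GaS = 0"

definition hcounit :: "hgen ncpoly \<Rightarrow> complex" where
  "hcounit p = (\<Sum>w | p w \<noteq> 0. p w * prod_list (map eps_gen w))"

definition Kel :: "real \<Rightarrow> real \<Rightarrow> hgen ncpoly" where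
  "Kel s q = nc_add
      (nc_smult (complex_of_real s) (nc_add (nc_mono [Ga,Al]) (nc_mono [AlS,GaS])))
      (nc_smult (complex_of_real (1 - s^2)) (nc_mono [GaS,Ga]))"

definition Lel :: "real \<Rightarrow> real \<Rightarrow> hgen ncpoly" where
  "Lel s q = nc_add
      (nc_smult (complex_of_real s)
          (nc_sub (nc_mono [Al,Al]) (nc_smult (complex_of_real q) (nc_mono [GaS,GaS]))))
      (nc_smult (complex_of_real (1 - s^2)) (nc_mono [Al,GaS]))"

datatype bgen = Kg | KgS | Lg | LgS

fun bgen_img :: "real \<Rightarrow> real \<Rightarrow> bgen \<Rightarrow> hgen ncpoly" where
  "bgen_img s q Kg = Kel s q"
| "bgen_img s q KgS = nc_star hstar (Kel s q)"
| "bgen_img s q Lg = Lel s q"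
| "bgen_img s q LgS = nc_star hstar (Lel s q)"

definition bword_img :: "real \<Rightarrow> real \<Rightarrow> bgen list \<Rightarrow> hgen ncpoly" where
  "bword_img s q w = foldr (\<lambda>x acc. nc_mult (bgen_img s q x) acc) w (nc_const 1)"

text \<open>The inclusion: a noncommutative polynomial in K,K*,L,L* gives an element of B \<subseteq> H.
  Every element of B arises this way.\<close>
definition bincl :: "real \<Rightarrow> real \<Rightarrow> bgen ncpoly \<Rightarrow> hgen ncpoly" where
  "bincl s q f = (\<lambda>v. \<Sum>w | f w \<noteq> 0. f w * bword_img s q w v)"

text \<open>An operator T is recorded by its matrix entries T m n = <T e_n, e_m>.\<close>
type_synonym imat = "nat \<Rightarrow> nat \<Rightarrow> complex"

definition mat_id :: imat where "mat_id = (\<lambda>m n. if m = n then 1 else 0)"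
definition mat_mult :: "imat \<Rightarrow> imat \<Rightarrow> imat" where
  "mat_mult A B = (\<lambda>m n. infsum (\<lambda>k. A m k * B k n) UNIV)"
definition mat_adj :: "imat \<Rightarrow> imat" where
  "mat_adj A = (\<lambda>m n. cnj (A n m))"

definition piK_minus :: "real \<Rightarrow> real \<Rightarrow> imat" where
  "piK_minus s q = (\<lambda>m n. if m = n then complex_of_real (- (s^2 * q^(2*n))) else 0)"
definition piL_minus :: "real \<Rightarrow> real \<Rightarrow> imat" where
  "piL_minus s q = (\<lambda>m n. if Suc m = n
      then complex_of_real (s * sqrt (1 - (1 - s^2) * q^(2*n) - s^2 * q^(4*n))) else 0)"
definition piK_plus :: "real \<Rightarrow> real \<Rightarrow> imat" where
  "piK_plus s q = (\<lambda>m n. if m = n then complex_of_real (q^(2*n)) else 0)"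
definition piL_plus :: "real \<Rightarrow> real \<Rightarrow> imat" where
  "piL_plus s q = (\<lambda>m n. if Suc m = n
      then complex_of_real (sqrt (s^2 + (1 - s^2) * q^(2*n) - q^(4*n))) else 0)"

fun rep_gen :: "imat \<Rightarrow> imat \<Rightarrow> bgen \<Rightarrow> imat" where
  "rep_gen TK TL Kg = TK"
| "rep_gen TK TL KgS = mat_adj TK"
| "rep_gen TK TL Lg = TL"
| "rep_gen TK TL LgS = mat_adj TL"

definition rep_word :: "imat \<Rightarrow> imat \<Rightarrow> bgen list \<Rightarrow> imat" where
  "rep_word TK TL w = foldr (\<lambda>x acc. mat_mult (rep_gen TK TL x) acc) w mat_id"

definition rep :: "imat \<Rightarrow> imat \<Rightarrow> bgen ncpoly \<Rightarrow> imat" where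
  "rep TK TL f = (\<lambda>m n. \<Sum>w | f w \<noteq> 0. f w * rep_word TK TL w m n)"

definition pi_minus :: "real \<Rightarrow> real \<Rightarrow> bgen ncpoly \<Rightarrow> imat" where
  "pi_minus s q = rep (piK_minus s q) (piL_minus s q)"
definition pi_plus :: "real \<Rightarrow> real \<Rightarrow> bgen ncpoly \<Rightarrow> imat" where
  "pi_plus s q = rep (piK_plus s q) (piL_plus s q)"

text \<open>tr_pi = Tr o (pi_- - pi_+), the operator trace of a trace-class operator being the
  (absolutely convergent) sum of its diagonal entries in the orthonormal basis.\<close>
definition trpi :: "real \<Rightarrow> real \<Rightarrow> bgen ncpoly \<Rightarrow> complex" where
  "trpi s q f = infsum (\<lambda>n. pi_minus s q f n n - pi_plus s q f n n) UNIV"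

definition B_idempotent :: "real \<Rightarrow> real \<Rightarrow> nat \<Rightarrow> (nat \<Rightarrow> nat \<Rightarrow> bgen ncpoly) \<Rightarrow> bool" where
  "B_idempotent s q n E \<longleftrightarrow>
     (\<forall>i<n. \<forall>j<n. fin_supp (E i j)) \<and>
     (\<forall>i<n. \<forall>j<n.
        nc_sub (\<lambda>w. \<Sum>k<n. nc_mult (bincl s q (E i k)) (bincl s q (E k j)) w)
               (bincl s q (E i j)) \<in> suq_ideal q)"

end

theory Submission
  imports Defs "HOL-Library.Poly_Mapping" "HOL-Computational_Algebra.Polynomial_Factorial"
    "HOL-Computational_Algebra.Field_as_Ring"
begin

text \<open>The idempotent is a 2x2 block matrix [[A(K), L^N], [C(K) L*^N, D(K)]], padded with an
  identity block. The relations LK = q^2 KL, KL* = q^2 L*K, L*L = phi(K) and LL* = phi(q^2 K),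
  where phi(x) = s^2 + (1 - s^2) x - x^2, give L^N L*^N = Phi_N(K) with
  Phi_N(x) = prod_(j=1..N) phi(q^(2j) x), and the matrix is idempotent as soon as
  A(1 - A) = W Phi_N, C(x) = W(q^(-2N) x) and D(x) = 1 - A(q^(-2N) x).
  Phi_N splits into two coprime factors vanishing at the points -s^2 q^(-2j) and q^(-2j)
  (1 <= j <= N), so by Bezout there is such an A equal to 1 at one set of points and 0 at the
  other. The counit of the diagonal is A(0) + D(0) = 1. Since tr_pi(p(K)) is the sum over n of
  p(-s^2 q^(2n)) - p(q^(2n)), the traces of A(K) and D(K) telescope to
  sum_(j=1..N) (A(q^(-2j)) - A(-s^2 q^(-2j))) = +-N. The identity block adds 1 to the counit
  per entry and nothing to the trace.\<close>

section \<open>The free algebra on a set of letters\<close>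

text \<open>Making concatenation the addition of words turns the convolution product of
  finitely supported coefficient functions on words into the product of the free algebra.\<close>

instantiation list :: (type) monoid_add
begin
definition zero_list_def: "0 = []"
definition plus_list_def: "(xs::'a list) + ys = xs @ ys"
instance by standard (simp_all add: zero_list_def plus_list_def)
end

type_synonym 'g free_alg = "'g list \<Rightarrow>\<^sub>0 complex"

abbreviation lookup :: "'g free_alg \<Rightarrow> 'g list \<Rightarrow> complex" where
  "lookup \<equiv> Poly_Mapping.lookup"
abbreviation single :: "'g list \<Rightarrow> complex \<Rightarrow> 'g free_alg" where
  "single \<equiv> Poly_Mapping.single"
abbreviation scalar :: "complex \<Rightarrow> 'g free_alg" where
  "scalar c \<equiv> single [] c"

lemma prod_fun_list:
  fixes f g :: "'a list \<Rightarrow> 'b::semiring_0"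
  assumes "finite {a. f a \<noteq> 0}" "finite {b. g b \<noteq> 0}"
  shows "prod_fun f g w = (\<Sum>i\<le>length w. f (take i w) * g (drop i w))"
proof -
  let ?split = "\<lambda>i. (take i w, drop i w)"
  have "prod_fun f g w = (\<Sum>(a, b). f a * g b when w = a + b)"
    by (rule prod_fun_unfold_prod[OF assms])
  also have "\<dots> = (\<Sum>ab\<in>?split ` {..length w}. case ab of (a, b) \<Rightarrow> f a * g b when w = a + b)"
  proof (rule Sum_any.expand_superset)
    show "{ab. (case ab of (a, b) \<Rightarrow> f a * g b when w = a + b) \<noteq> 0} \<subseteq> ?split ` {..length w}"
    proof
      fix ab assume "ab \<in> {ab. (case ab of (a, b) \<Rightarrow> f a * g b when w = a + b) \<noteq> 0}"
      then obtain a b where "ab = (a, b)" "w = a @ b" by (cases ab) (auto simp: plus_list_def)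
      then show "ab \<in> ?split ` {..length w}" by (intro image_eqI[where x = "length a"]) auto
    qed
  qed simp
  also have "\<dots> = (\<Sum>i\<le>length w. f (take i w) * g (drop i w))"
  proof (subst sum.reindex)
    show "inj_on ?split {..length w}"
      by (rule inj_onI) (metis Pair_inject atMost_iff length_take min.absorb2)
  qed (simp add: plus_list_def)
  finally show ?thesis .
qed

lemma lookup_times: "lookup (X * Y) = nc_mult (lookup X) (lookup Y)"
proof
  fix w
  have "lookup (X * Y) w = prod_fun (lookup X) (lookup Y) w"
    by (simp add: times_poly_mapping.rep_eq)
  also have "\<dots> = nc_mult (lookup X) (lookup Y) w"
    unfolding nc_mult_def by (rule prod_fun_list) (simp_all add: finite_lookup)
  finally show "lookup (X * Y) w = nc_mult (lookup X) (lookup Y) w" .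
qed

lemma single_mult: "single u c * single v d = single (u @ v) (c * d)"
  by (simp add: mult_single plus_list_def)

lemma scalar_one: "scalar 1 = 1"
  using single_one[where 'a = "'g list"] by (simp add: zero_list_def)

lemma lookup_one_nc: "lookup 1 = nc_const 1"
  by (simp add: fun_eq_iff lookup_one when_def zero_list_def nc_const_def eq_commute)

lemma free_alg_expand: "X = (\<Sum>w\<in>Poly_Mapping.keys X. single w (lookup X w))"
proof -
  have "finite I \<Longrightarrow> lookup (\<Sum>w\<in>I. single w (lookup X w)) v = (if v \<in> I then lookup X v else 0)"
    for I v by (induction I rule: finite_induct) (auto simp: lookup_single lookup_add when_def)
  then show ?thesis by (intro poly_mapping_eqI) (auto simp: in_keys_iff)
qed

lemma free_alg_mult_expand:
  "X * Y = (\<Sum>u\<in>Poly_Mapping.keys X. \<Sum>v\<in>Poly_Mapping.keys Y. single (u @ v) (lookup X u * lookup Y v))"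
proof -
  have "X * Y = (\<Sum>v\<in>Poly_Mapping.keys Y. \<Sum>u\<in>Poly_Mapping.keys X. single (u @ v) (lookup X u * lookup Y v))"
    by (subst free_alg_expand[of X], subst free_alg_expand[of Y])
       (simp add: sum_distrib_left sum_distrib_right single_mult)
  then show ?thesis
    by (simp only: sum.swap[of _ "Poly_Mapping.keys Y"])
qed

lemma scalar_commute: "scalar c * X = X * scalar c"
  by (subst (1 2) free_alg_expand[of X])
     (simp add: sum_distrib_left sum_distrib_right single_mult mult.commute)

lemma scalar_mult: "scalar a * scalar b = scalar (a * b)"
  by (simp add: single_mult)

lemma scalar_left_commute: "X * (scalar c * Y) = scalar c * (X * Y)"
  by (metis mult.assoc scalar_commute)

lemma scalar_mult_left: "scalar a * (scalar b * X) = scalar (a * b) * X"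
  by (simp add: scalar_mult mult.assoc[symmetric])

lemma lookup_scalar_mult: "lookup (scalar c * X) w = c * lookup X w"
proof -
  have "(\<Sum>i\<le>length w. (if i = 0 \<or> w = [] then c else 0) * lookup X (drop i w)) = c * lookup X w"
    by (cases w) (simp_all add: sum.atMost_Suc_shift del: sum.atMost_Suc)
  then show ?thesis by (simp add: lookup_times nc_mult_def lookup_single when_def)
qed

section \<open>Polynomials in an element of the free algebra\<close>

definition alg_poly :: "complex poly \<Rightarrow> 'g free_alg \<Rightarrow> 'g free_alg" where
  "alg_poly p X = (\<Sum>i\<le>degree p. scalar (coeff p i) * X ^ i)"

lemma alg_poly_upto: "degree p \<le> n \<Longrightarrow> alg_poly p X = (\<Sum>i\<le>n. scalar (coeff p i) * X ^ i)"
  unfolding alg_poly_def by (rule sum.mono_neutral_left) (auto simp: coeff_eq_0)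

lemma alg_poly_0 [simp]: "alg_poly 0 X = 0"
  by (simp add: alg_poly_def)

lemma alg_poly_add: "alg_poly (p + r) X = alg_poly p X + alg_poly r X"
proof -
  let ?n = "max (degree p) (degree r)"
  have "alg_poly (p + r) X = (\<Sum>i\<le>?n. scalar (coeff (p + r) i) * X ^ i)"
    by (rule alg_poly_upto) (simp add: degree_add_le)
  also have "\<dots> = (\<Sum>i\<le>?n. scalar (coeff p i) * X ^ i) + (\<Sum>i\<le>?n. scalar (coeff r i) * X ^ i)"
    by (simp add: single_add distrib_right sum.distrib)
  also have "\<dots> = alg_poly p X + alg_poly r X"
    using alg_poly_upto[of p ?n X] alg_poly_upto[of r ?n X] by simp
  finally show ?thesis .
qed

lemma alg_poly_pCons: "alg_poly (pCons a p) X = scalar a + X * alg_poly p X"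
proof -
  have "alg_poly (pCons a p) X = (\<Sum>i\<le>Suc (degree p). scalar (coeff (pCons a p) i) * X ^ i)"
    by (rule alg_poly_upto) (simp add: degree_pCons_le)
  also have "\<dots> = scalar a + (\<Sum>i\<le>degree p. scalar (coeff p i) * X ^ Suc i)"
    by (simp add: sum.atMost_Suc_shift del: sum.atMost_Suc)
  also have "\<dots> = scalar a + X * alg_poly p X"
    by (simp add: alg_poly_def sum_distrib_left scalar_left_commute mult.assoc)
  finally show ?thesis .
qed

lemma alg_poly_1: "alg_poly 1 X = 1"
  by (simp add: one_pCons alg_poly_pCons scalar_one)

lemma alg_poly_smult: "alg_poly (smult a p) X = scalar a * alg_poly p X"
  by (induction p) (simp_all add: alg_poly_pCons distrib_left scalar_mult scalar_left_commute)

lemma alg_poly_mult: "alg_poly (p * r) X = alg_poly p X * alg_poly r X"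
proof (induction p)
  case (pCons a p)
  have "alg_poly (pCons a p * r) X = scalar a * alg_poly r X + X * alg_poly (p * r) X"
    by (simp only: mult_pCons_left alg_poly_add alg_poly_smult alg_poly_pCons) simp
  also have "\<dots> = alg_poly (pCons a p) X * alg_poly r X"
    using pCons by (simp add: alg_poly_pCons distrib_right mult.assoc)
  finally show ?case .
qed simp

lemma alg_poly_diff: "alg_poly (p - r) X = alg_poly p X - alg_poly r X"
proof -
  have "alg_poly (- r) X = - alg_poly r X"
    using alg_poly_smult[of "- 1" r X] by (simp add: single_uminus scalar_one)
  then show ?thesis
    using alg_poly_add[of p "- r" X] by simp
qed

lemma alg_poly_quadratic: "alg_poly [:a, b, - c:] X = scalar a + scalar b * X - scalar c * (X * X)"
proof -
  have "X * (X * scalar c) = scalar c * (X * X)"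
    by (metis mult.assoc scalar_commute)
  then show ?thesis
    by (simp add: alg_poly_pCons distrib_left right_diff_distrib scalar_commute[of b X] single_uminus)
qed

definition rescale :: "complex \<Rightarrow> complex poly \<Rightarrow> complex poly" where
  "rescale a p = pcompose p [:0, a:]"

lemma coeff_rescale: "coeff (rescale a p) i = a ^ i * coeff p i"
  by (simp add: rescale_def coeff_pcompose_linear)

lemma degree_rescale_le: "degree (rescale a p) \<le> degree p"
  by (rule degree_le) (simp add: coeff_rescale coeff_eq_0)

lemma rescale_rescale: "rescale a (rescale b p) = rescale (a * b) p"
  by (rule poly_eqI) (simp add: coeff_rescale power_mult_distrib)

lemma rescale_diff: "rescale a (p - r) = rescale a p - rescale a r"
  by (simp add: rescale_def pcompose_diff)

lemma rescale_mult: "rescale a (p * r) = rescale a p * rescale a r"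
  by (simp add: rescale_def pcompose_mult)

lemma rescale_by_1 [simp]: "rescale 1 p = p"
  by (rule poly_eqI) (simp add: coeff_rescale)

lemma rescale_1 [simp]: "rescale a 1 = 1"
  by (simp add: rescale_def pcompose_1)

lemma rescale_quadratic: "rescale a [:x, y, z:] = [:x, a * y, a ^ 2 * z:]"
  by (rule poly_eqI) (simp add: coeff_rescale coeff_pCons power2_eq_square split: nat.split)

lemma single_letter_power: "single [x] 1 ^ i = single (replicate i x) 1"
  by (induction i) (simp_all add: scalar_one single_mult)

lemma alg_poly_single_letter:
  "alg_poly p (single [x] 1) = (\<Sum>i\<le>degree p. single (replicate i x) (coeff p i))"
  by (simp add: alg_poly_def single_letter_power single_mult)

section \<open>Linear functionals on the free algebra\<close>

definition lin_ext :: "('g list \<Rightarrow> complex) \<Rightarrow> 'g free_alg \<Rightarrow> complex" where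
  "lin_ext \<phi> X = (\<Sum>w\<in>Poly_Mapping.keys X. lookup X w * \<phi> w)"

lemma lin_ext_superset:
  "finite S \<Longrightarrow> Poly_Mapping.keys X \<subseteq> S \<Longrightarrow> lin_ext \<phi> X = (\<Sum>w\<in>S. lookup X w * \<phi> w)"
  unfolding lin_ext_def by (rule sum.mono_neutral_left) (auto simp: in_keys_iff)

lemma lin_ext_add: "lin_ext \<phi> (X + Y) = lin_ext \<phi> X + lin_ext \<phi> Y"
proof -
  let ?S = "Poly_Mapping.keys X \<union> Poly_Mapping.keys Y"
  have "lin_ext \<phi> (X + Y) = (\<Sum>w\<in>?S. lookup (X + Y) w * \<phi> w)"
    by (rule lin_ext_superset) (auto simp: keys_add)
  also have "\<dots> = (\<Sum>w\<in>?S. lookup X w * \<phi> w) + (\<Sum>w\<in>?S. lookup Y w * \<phi> w)"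
    by (simp add: lookup_add distrib_right sum.distrib)
  also have "\<dots> = lin_ext \<phi> X + lin_ext \<phi> Y"
    by (simp add: lin_ext_superset[symmetric])
  finally show ?thesis .
qed

lemma lin_ext_0 [simp]: "lin_ext \<phi> 0 = 0"
  by (simp add: lin_ext_def)

lemma lin_ext_sum: "lin_ext \<phi> (\<Sum>i\<in>I. X i) = (\<Sum>i\<in>I. lin_ext \<phi> (X i))"
  by (induction I rule: infinite_finite_induct) (simp_all add: lin_ext_add)

lemma lin_ext_single: "lin_ext \<phi> (single w c) = c * \<phi> w"
  by (cases "c = 0") (simp_all add: lin_ext_def)

lemma lin_ext_mult:
  assumes "\<And>u v. \<phi> (u @ v) = \<phi> u * \<phi> v"
  shows "lin_ext \<phi> (X * Y) = lin_ext \<phi> X * lin_ext \<phi> Y"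
proof -
  have "lin_ext \<phi> (X * Y) = (\<Sum>u\<in>Poly_Mapping.keys X. \<Sum>v\<in>Poly_Mapping.keys Y.
      lookup X u * lookup Y v * (\<phi> u * \<phi> v))"
    by (simp add: free_alg_mult_expand lin_ext_sum lin_ext_single assms)
  also have "\<dots> = lin_ext \<phi> X * lin_ext \<phi> Y"
    by (simp add: lin_ext_def sum_product ac_simps)
  finally show ?thesis .
qed

lemma lin_ext_alg_poly:
  assumes "\<And>u v. \<phi> (u @ v) = \<phi> u * \<phi> v" and "\<phi> [] = 1"
  shows "lin_ext \<phi> (alg_poly p X) = poly p (lin_ext \<phi> X)"
  by (induction p) (simp_all add: alg_poly_pCons lin_ext_add lin_ext_mult lin_ext_single assms)

lemma lin_ext_alg_poly_single_letter:
  assumes "\<And>i. \<phi> (replicate i x) = z ^ i"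
  shows "lin_ext \<phi> (alg_poly p (single [x] 1)) = poly p z"
  by (simp add: alg_poly_single_letter lin_ext_sum lin_ext_single assms poly_altdef)

section \<open>The ideal of relations of O(SU_q(2))\<close>

inductive_set rel_ideal :: "real \<Rightarrow> hgen free_alg set" for q :: real where
  zero: "0 \<in> rel_ideal q"
| add: "x \<in> rel_ideal q \<Longrightarrow> y \<in> rel_ideal q \<Longrightarrow> x + y \<in> rel_ideal q"
| gen: "lookup r \<in> suq_rels q \<Longrightarrow> single u c * r * single v 1 \<in> rel_ideal q"

lemma rel_ideal_sound: "x \<in> rel_ideal q \<Longrightarrow> lookup x \<in> suq_ideal q"
proof (induction rule: rel_ideal.induct)
  case zero
  then show ?case using suq_ideal.zero by (simp add: nc_zero_def[symmetric] fun_eq_iff)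
next
  case (add x y)
  have "lookup (x + y) = nc_add (lookup x) (lookup y)" by (simp add: fun_eq_iff lookup_add nc_add_def)
  then show ?case using add suq_ideal.add by simp
next
  case (gen r u c v)
  have single_eq: "lookup (single w a) = nc_smult a (nc_mono w)" for w a
    by (simp add: fun_eq_iff lookup_single nc_smult_def nc_mono_def when_def)
  have smult_mult: "nc_mult (nc_smult a x) y = nc_smult a (nc_mult x y)" for a x y
    by (simp add: fun_eq_iff nc_mult_def nc_smult_def sum_distrib_left mult.assoc)
  have smult_one: "nc_smult 1 x = x" for x
    by (simp add: fun_eq_iff nc_smult_def)
  have "lookup (single u c * r * single v 1) =
      nc_smult c (nc_mult (nc_mult (nc_mono u) (lookup r)) (nc_mono v))"
    by (simp only: lookup_times single_eq smult_mult smult_one)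
  then show ?case using gen suq_ideal.gen by simp
qed

lemma rel_ideal_sum: "finite I \<Longrightarrow> (\<And>i. i \<in> I \<Longrightarrow> f i \<in> rel_ideal q) \<Longrightarrow> sum f I \<in> rel_ideal q"
  by (induction I rule: finite_induct) (auto intro: rel_ideal.intros)

lemma rel_ideal_uminus: "x \<in> rel_ideal q \<Longrightarrow> - x \<in> rel_ideal q"
proof (induction rule: rel_ideal.induct)
  case (gen r u c v)
  have "- (single u c * r * single v 1) = single u (- c) * r * single v 1" by (simp add: single_uminus)
  then show ?case using gen rel_ideal.gen by metis
next
  case (add x y)
  then have "- x + - y \<in> rel_ideal q" by (intro rel_ideal.add)
  then show ?case by simp
qed (auto intro: rel_ideal.intros)

lemma rel_ideal_mult_left: "x \<in> rel_ideal q \<Longrightarrow> Z * x \<in> rel_ideal q"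
proof (induction rule: rel_ideal.induct)
  case (add x y)
  then show ?case by (simp add: distrib_left rel_ideal.add)
next
  case (gen r u c v)
  have "Z * (single u c * r * single v 1) =
      (\<Sum>w\<in>Poly_Mapping.keys Z. single (w @ u) (lookup Z w * c) * r * single v 1)"
    by (subst free_alg_expand[of Z]) (simp add: sum_distrib_right mult.assoc[symmetric] single_mult)
  also have "\<dots> \<in> rel_ideal q" by (rule rel_ideal_sum) (auto intro: rel_ideal.gen gen)
  finally show ?case .
qed (simp add: rel_ideal.zero)

lemma rel_ideal_relI: "lookup r \<in> suq_rels q \<Longrightarrow> single u c * r * single v d \<in> rel_ideal q"
proof -
  assume r: "lookup r \<in> suq_rels q"
  have "single u c * r * single v d = single u c * (r * (scalar d * single v 1))"
    by (simp add: single_mult mult.assoc)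
  also have "\<dots> = (single u c * scalar d) * r * single v 1"
    by (simp only: scalar_left_commute mult.assoc)
  also have "\<dots> = single u (c * d) * r * single v 1"
    by (simp add: single_mult)
  finally show ?thesis using rel_ideal.gen[OF r] by simp
qed

lemma rel_ideal_mult_right: "x \<in> rel_ideal q \<Longrightarrow> x * Z \<in> rel_ideal q"
proof (induction rule: rel_ideal.induct)
  case (add x y)
  then show ?case by (simp add: distrib_right rel_ideal.add)
next
  case (gen r u c v)
  have "single u c * r * single v 1 * Z =
      (\<Sum>w\<in>Poly_Mapping.keys Z. single u c * r * single (v @ w) (lookup Z w))"
    by (subst free_alg_expand[of Z]) (simp add: sum_distrib_left mult.assoc single_mult)
  also have "\<dots> \<in> rel_ideal q" by (rule rel_ideal_sum) (auto intro: rel_ideal_relI gen)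
  finally show ?case .
qed (simp add: rel_ideal.zero)

definition hcong :: "real \<Rightarrow> hgen free_alg \<Rightarrow> hgen free_alg \<Rightarrow> bool" where
  "hcong q x y \<longleftrightarrow> x - y \<in> rel_ideal q"

lemma hcong_refl [simp]: "hcong q x x"
  by (simp add: hcong_def rel_ideal.zero)

lemma hcong_sym: "hcong q x y \<Longrightarrow> hcong q y x"
  unfolding hcong_def using rel_ideal_uminus by fastforce

lemma hcong_trans [trans]: "hcong q x y \<Longrightarrow> hcong q y z \<Longrightarrow> hcong q x z"
  unfolding hcong_def using rel_ideal.add by fastforce

lemma eq_hcong_trans [trans]: "x = y \<Longrightarrow> hcong q y z \<Longrightarrow> hcong q x z"
  and hcong_eq_trans [trans]: "hcong q x y \<Longrightarrow> y = z \<Longrightarrow> hcong q x z"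
  by simp_all

lemma hcong_add: "hcong q x y \<Longrightarrow> hcong q x' y' \<Longrightarrow> hcong q (x + x') (y + y')"
  unfolding hcong_def using rel_ideal.add by (fastforce simp: algebra_simps)

lemma hcong_mult_left: "hcong q x y \<Longrightarrow> hcong q (Z * x) (Z * y)"
  unfolding hcong_def using rel_ideal_mult_left by (fastforce simp: algebra_simps)

lemma hcong_mult_right: "hcong q x y \<Longrightarrow> hcong q (x * Z) (y * Z)"
  unfolding hcong_def using rel_ideal_mult_right by (fastforce simp: algebra_simps)

lemma hcong_sum:
  "finite I \<Longrightarrow> (\<And>i. i \<in> I \<Longrightarrow> hcong q (f i) (g i)) \<Longrightarrow> hcong q (sum f I) (sum g I)"
  by (induction I rule: finite_induct) (auto intro: hcong_add)

lemma hcong_commute_power: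
  assumes "hcong q (Y * X) (scalar a * X * Y)"
  shows "hcong q (Y * X ^ i) (scalar (a ^ i) * X ^ i * Y)"
proof (induction i)
  case (Suc i)
  have "Y * X ^ Suc i = (Y * X ^ i) * X"
    by (simp only: power_Suc2 mult.assoc)
  also have "hcong q \<dots> (scalar (a ^ i) * X ^ i * (Y * X))"
    using hcong_mult_right[OF Suc] by (simp add: mult.assoc)
  also have "hcong q \<dots> (scalar (a ^ i) * X ^ i * (scalar a * X * Y))"
    using assms by (rule hcong_mult_left)
  also have "scalar (a ^ i) * X ^ i * (scalar a * X * Y) = scalar (a ^ Suc i) * X ^ Suc i * Y"
  proof -
    have "X ^ i * (scalar a * X * Y) = scalar a * (X ^ Suc i * Y)"
      by (simp only: mult.assoc scalar_left_commute) (simp only: mult.assoc[symmetric] power_Suc2)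
    then show ?thesis
      by (simp add: mult.assoc scalar_mult_left mult.commute)
  qed
  finally show ?case .
qed (simp add: scalar_one)

lemma hcong_commute_alg_poly:
  assumes "hcong q (Y * X) (scalar a * X * Y)"
  shows "hcong q (Y * alg_poly p X) (alg_poly (rescale a p) X * Y)"
proof -
  have "Y * alg_poly p X = (\<Sum>i\<le>degree p. scalar (coeff p i) * (Y * X ^ i))"
    by (simp add: alg_poly_def sum_distrib_left scalar_left_commute)
  also have "hcong q \<dots> (\<Sum>i\<le>degree p. scalar (coeff p i) * (scalar (a ^ i) * X ^ i * Y))"
    by (rule hcong_sum) (auto intro: hcong_mult_left hcong_commute_power assms)
  also have "\<dots> = (\<Sum>i\<le>degree p. scalar (coeff (rescale a p) i) * X ^ i) * Y"
    by (simp add: sum_distrib_right coeff_rescale mult.assoc scalar_mult_left mult.commute)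
  also have "\<dots> = alg_poly (rescale a p) X * Y"
    by (simp add: alg_poly_upto[OF degree_rescale_le])
  finally show ?thesis .
qed

lemma hcong_power_commute_alg_poly:
  assumes "hcong q (Y * X) (scalar a * X * Y)"
  shows "hcong q (Y ^ N * alg_poly p X) (alg_poly (rescale (a ^ N) p) X * Y ^ N)"
proof (induction N arbitrary: p)
  case (Suc N)
  have "Y ^ Suc N * alg_poly p X = Y ^ N * (Y * alg_poly p X)"
    by (simp only: power_Suc2 mult.assoc)
  also have "hcong q \<dots> (Y ^ N * alg_poly (rescale a p) X * Y)"
    using hcong_mult_left[OF hcong_commute_alg_poly[OF assms]] by (simp add: mult.assoc)
  also have "hcong q \<dots> (alg_poly (rescale (a ^ N) (rescale a p)) X * Y ^ N * Y)"
    by (rule hcong_mult_right) (rule Suc.IH)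
  also have "alg_poly (rescale (a ^ N) (rescale a p)) X * Y ^ N * Y = alg_poly (rescale (a ^ Suc N) p) X * Y ^ Suc N"
    by (simp add: rescale_rescale power_Suc2 mult.assoc power_commutes mult.commute)
  finally show ?case .
qed simp

section \<open>Commutation relations between the generators of the Podles sphere\<close>

text \<open>\<open>rel1\<close>--\<open>rel5\<close> are the relations of \<open>suq_rels0\<close> in the order listed there;
  \<open>rel6\<close> and \<open>rel7\<close> are the adjoints of \<open>rel1\<close> and \<open>rel2\<close>.\<close>

definition rel1 :: "real \<Rightarrow> hgen free_alg" where
  "rel1 q = single [Al,Ga] 1 - single [Ga,Al] (of_real q)"
definition rel2 :: "real \<Rightarrow> hgen free_alg" where
  "rel2 q = single [Al,GaS] 1 - single [GaS,Al] (of_real q)"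
definition rel3 :: "hgen free_alg" where
  "rel3 = single [Ga,GaS] 1 - single [GaS,Ga] 1"
definition rel4 :: "hgen free_alg" where
  "rel4 = single [AlS,Al] 1 + single [GaS,Ga] 1 - 1"
definition rel5 :: "real \<Rightarrow> hgen free_alg" where
  "rel5 q = single [Al,AlS] 1 + single [Ga,GaS] (of_real (q^2)) - 1"
definition rel6 :: "real \<Rightarrow> hgen free_alg" where
  "rel6 q = single [GaS,AlS] 1 - single [AlS,GaS] (of_real q)"
definition rel7 :: "real \<Rightarrow> hgen free_alg" where
  "rel7 q = single [Ga,AlS] 1 - single [AlS,Ga] (of_real q)"

lemma hstar_hstar [simp]: "hstar (hstar x) = x"
  by (cases x) auto

lemma rev_map_hstar_eq: "rev (map hstar w) = u \<longleftrightarrow> w = rev (map hstar u)"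
  by (auto simp: rev_map comp_def)

lemma hstar_eq: "hstar x = y \<longleftrightarrow> x = hstar y"
  by (cases x; cases y) auto

lemmas lookup_free_simps = lookup_minus lookup_add lookup_single when_def lookup_one_nc

lemma rels_in_suq_rels:
  "lookup (rel1 q) \<in> suq_rels q" "lookup (rel2 q) \<in> suq_rels q" "lookup rel3 \<in> suq_rels q"
  "lookup rel4 \<in> suq_rels q" "lookup (rel5 q) \<in> suq_rels q" "lookup (rel6 q) \<in> suq_rels q"
  "lookup (rel7 q) \<in> suq_rels q"
proof -
  let ?r1 = "nc_sub (nc_mono [Al,Ga]) (nc_smult (complex_of_real q) (nc_mono [Ga,Al]))"
  let ?r2 = "nc_sub (nc_mono [Al,GaS]) (nc_smult (complex_of_real q) (nc_mono [GaS,Al]))"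
  have "lookup (rel1 q) = ?r1"
    by (simp add: fun_eq_iff rel1_def lookup_free_simps nc_sub_def nc_smult_def nc_mono_def)
  then show "lookup (rel1 q) \<in> suq_rels q" by (simp add: suq_rels_def suq_rels0_def)
  have "lookup (rel2 q) = ?r2"
    by (simp add: fun_eq_iff rel2_def lookup_free_simps nc_sub_def nc_smult_def nc_mono_def)
  then show "lookup (rel2 q) \<in> suq_rels q" by (simp add: suq_rels_def suq_rels0_def)
  have "lookup rel3 = nc_sub (nc_mono [Ga,GaS]) (nc_mono [GaS,Ga])"
    by (simp add: fun_eq_iff rel3_def lookup_free_simps nc_sub_def nc_mono_def)
  then show "lookup rel3 \<in> suq_rels q" by (simp add: suq_rels_def suq_rels0_def)
  have "lookup rel4 = nc_sub (nc_add (nc_mono [AlS,Al]) (nc_mono [GaS,Ga])) (nc_const 1)"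
    by (simp add: fun_eq_iff rel4_def lookup_free_simps nc_sub_def nc_add_def nc_mono_def)
  then show "lookup rel4 \<in> suq_rels q" by (simp add: suq_rels_def suq_rels0_def)
  have "lookup (rel5 q) = nc_sub (nc_add (nc_mono [Al,AlS])
      (nc_smult (complex_of_real (q^2)) (nc_mono [Ga,GaS]))) (nc_const 1)"
    by (simp add: fun_eq_iff rel5_def lookup_free_simps nc_sub_def nc_add_def nc_smult_def nc_mono_def)
  then show "lookup (rel5 q) \<in> suq_rels q" by (simp add: suq_rels_def suq_rels0_def)
  have "lookup (rel6 q) = nc_star hstar ?r1"
    by (auto simp: fun_eq_iff rel6_def lookup_free_simps nc_star_def nc_sub_def nc_smult_def
        nc_mono_def rev_map_hstar_eq hstar_eq)
  then show "lookup (rel6 q) \<in> suq_rels q" by (simp add: suq_rels_def suq_rels0_def)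
  have "lookup (rel7 q) = nc_star hstar ?r2"
    by (auto simp: fun_eq_iff rel7_def lookup_free_simps nc_star_def nc_sub_def nc_smult_def
        nc_mono_def rev_map_hstar_eq hstar_eq)
  then show "lookup (rel7 q) \<in> suq_rels q" by (simp add: suq_rels_def suq_rels0_def)
qed

definition Kh :: "real \<Rightarrow> hgen free_alg" where
  "Kh s = single [Ga,Al] (of_real s) + single [AlS,GaS] (of_real s) + single [GaS,Ga] (1 - of_real s ^ 2)"
definition Lh :: "real \<Rightarrow> real \<Rightarrow> hgen free_alg" where
  "Lh s q = single [Al,Al] (of_real s) - single [GaS,GaS] (of_real s * of_real q)
    + single [Al,GaS] (1 - of_real s ^ 2)"
definition Lh_adj :: "real \<Rightarrow> real \<Rightarrow> hgen free_alg" where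
  "Lh_adj s q = single [AlS,AlS] (of_real s) - single [Ga,Ga] (of_real s * of_real q)
    + single [Ga,AlS] (1 - of_real s ^ 2)"

definition of_terms :: "('g list \<times> complex) list \<Rightarrow> 'g free_alg" where
  "of_terms xs = sum_list (map (\<lambda>(w, c). single w c) xs)"
definition terms_mult :: "('g list \<times> complex) list \<Rightarrow> ('g list \<times> complex) list \<Rightarrow> ('g list \<times> complex) list" where
  "terms_mult xs ys = concat (map (\<lambda>(u, c). map (\<lambda>(v, d). (u @ v, c * d)) ys) xs)"
definition terms_neg :: "('g list \<times> complex) list \<Rightarrow> ('g list \<times> complex) list" where
  "terms_neg xs = map (\<lambda>(w, c). (w, - c)) xs"
fun terms_insert :: "'g list \<times> complex \<Rightarrow> ('g list \<times> complex) list \<Rightarrow> ('g list \<times> complex) list" where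
  "terms_insert (w, c) [] = [(w, c)]"
| "terms_insert (w, c) ((v, d) # r) =
    (if w = v then (v, c + d) # r else (v, d) # terms_insert (w, c) r)"
definition terms_collect :: "('g list \<times> complex) list \<Rightarrow> ('g list \<times> complex) list" where
  "terms_collect xs = foldr terms_insert xs []"

lemma terms_mult_simps [simp]:
  "terms_mult [] ys = []"
  "terms_mult ((u, c) # xs) ys = map (\<lambda>(v, d). (u @ v, c * d)) ys @ terms_mult xs ys"
  by (simp_all add: terms_mult_def)

lemma terms_neg_simps [simp]: "terms_neg [] = []" "terms_neg ((w, c) # xs) = (w, - c) # terms_neg xs"
  by (simp_all add: terms_neg_def)

lemma of_terms_append: "of_terms xs + of_terms ys = of_terms (xs @ ys)"
  by (simp add: of_terms_def)

lemma of_terms_single: "single u c = of_terms [(u, c)]"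
  by (simp add: of_terms_def)

lemma of_terms_diff: "of_terms xs - of_terms ys = of_terms (xs @ terms_neg ys)"
proof -
  have "of_terms (terms_neg ys) = - of_terms ys"
    by (induction ys) (auto simp: of_terms_def single_uminus)
  then show ?thesis by (simp flip: of_terms_append)
qed

lemma of_terms_mult: "of_terms xs * of_terms ys = of_terms (terms_mult xs ys)"
proof (induction xs)
  case Nil
  then show ?case by (simp add: of_terms_def)
next
  case (Cons x xs)
  obtain u c where x: "x = (u, c)" by (cases x)
  have "of_terms [(u, c)] * of_terms ys = of_terms (map (\<lambda>(v, d). (u @ v, c * d)) ys)"
    by (induction ys) (auto simp: of_terms_def distrib_left single_mult)
  moreover have "of_terms (x # xs) = of_terms [(u, c)] + of_terms xs"
    by (simp add: of_terms_def x)
  ultimately have "of_terms (x # xs) * of_terms ys =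
      of_terms (map (\<lambda>(v, d). (u @ v, c * d)) ys) + of_terms (terms_mult xs ys)"
    using Cons by (simp add: distrib_right)
  then show ?case by (simp add: x of_terms_append)
qed

lemma of_terms_collect: "of_terms (terms_collect xs) = of_terms xs"
proof (induction xs)
  case Nil
  then show ?case by (simp add: terms_collect_def)
next
  case (Cons x xs)
  have "of_terms (terms_insert y r) = of_terms (y # r)" for y and r :: "('g list \<times> complex) list"
    by (induction y r rule: terms_insert.induct) (auto simp: of_terms_def single_add algebra_simps)
  then have "of_terms (terms_collect (x # xs)) = of_terms (x # terms_collect xs)"
    by (simp add: terms_collect_def)
  also have "\<dots> = of_terms (x # xs)"
    using Cons by (simp add: of_terms_def)
  finally show ?case .
qed

lemma of_terms_eqI:
  assumes "list_all (\<lambda>(w, c). c = 0) (terms_collect (xs @ terms_neg ys))"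
  shows "of_terms xs = of_terms ys"
proof -
  have "list_all (\<lambda>(w, c). c = 0) zs \<Longrightarrow> of_terms zs = 0" for zs :: "('g list \<times> complex) list"
    by (induction zs) (auto simp: of_terms_def)
  then have "of_terms (terms_collect (xs @ terms_neg ys)) = 0"
    using assms by blast
  then show ?thesis by (simp add: of_terms_collect flip: of_terms_diff)
qed

lemmas certificate_unfold = Kh_def Lh_def Lh_adj_def rel1_def rel2_def rel3_def rel4_def rel5_def
  rel6_def rel7_def scalar_one[symmetric] of_terms_single of_terms_append of_terms_diff of_terms_mult

text \<open>Each commutation relation is proved by exhibiting the difference of its two sides as an
  explicit combination of terms \<open>u * r * v\<close> with \<open>r\<close> a defining relation; the identity is
  checked by expanding both sides into sums of words and collecting coefficients.\<close>

lemma Lh_Kh_commute: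
  "hcong q (Lh s q * Kh s) (scalar (of_real q ^ 2) * Kh s * Lh s q)"
proof -
  have "Lh s q * Kh s - (scalar (of_real q ^ 2) * Kh s * Lh s q) =
    single [GaS] (- (of_real q^1 * of_real s^2)) * rel6 q * single [GaS] 1
    + scalar (- (of_real q^2 * of_real s^2)) * rel6 q * single [GaS,GaS] 1
    + single [GaS,GaS] ((of_real q^1 * of_real s^1) - (of_real q^1 * of_real s^3)) * rel3 * scalar 1
    + single [GaS] ((of_real q^1 * of_real s^1) - (of_real q^1 * of_real s^3)) * rel3 * single [GaS] 1
    + single [GaS] ((of_real q^1 * of_real s^2)) * rel3 * single [Al] 1
    + scalar (- (of_real q^3 * of_real s^1) + (of_real q^3 * of_real s^3)) * rel3 * single [GaS,GaS] 1
    + single [Al] ((of_real s^1) - (of_real s^3)) * rel6 q * single [GaS] 1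
    + scalar ((of_real q^1 * of_real s^1) - (of_real q^1 * of_real s^3)) * rel5 q * single [GaS,GaS] 1
    + single [Al,GaS] (- (1) + (2 * of_real s^2) - (of_real s^4)) * rel3 * scalar 1
    + single [Al] (- (1) + (2 * of_real s^2) - (of_real s^4)) * rel3 * single [GaS] 1
    + single [Al] (- (of_real s^1) + (of_real s^3)) * rel3 * single [Al] 1
    + single [Al] ((of_real s^2)) * rel5 q * single [GaS] 1
    + single [Al,Al] (- (of_real s^1) + (of_real s^3)) * rel3 * scalar 1
    + single [Al] ((of_real s^1) - (of_real s^3)) * rel1 q * single [GaS] 1
    + single [Ga] ((of_real q^1) - (2 * of_real q^1 * of_real s^2) + (of_real q^1 * of_real s^4)) * rel2 q * single [GaS] 1
    + scalar ((1) - (2 * of_real s^2) + (of_real s^4) - (of_real q^2 * of_real s^2)) * rel1 q * single [GaS,GaS] 1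
    + single [AlS] ((of_real q^1 * of_real s^1) - (of_real q^1 * of_real s^3)) * rel2 q * single [GaS] 1
    + single [AlS] ((of_real q^1 * of_real s^2)) * rel2 q * single [Al] 1
    + scalar (- (of_real q^1 * of_real s^1) + (of_real q^1 * of_real s^3)) * rel4 * single [GaS,GaS] 1
    + scalar (- (of_real q^1 * of_real s^2)) * rel4 * single [GaS,Al] 1
    + scalar ((of_real s^2)) * rel2 q * scalar 1
    + scalar ((of_real q^2) - (2 * of_real q^2 * of_real s^2) + (of_real q^2 * of_real s^4)) * rel3 * single [Al,GaS] 1
    + scalar ((of_real q^2 * of_real s^1) - (of_real q^2 * of_real s^3)) * rel3 * single [Al,Al] 1
    + single [Ga] ((of_real q^1 * of_real s^1) - (of_real q^1 * of_real s^3)) * rel2 q * single [Al] 1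
    + scalar ((of_real s^1) - (of_real s^3)) * rel1 q * single [GaS,Al] 1
    + scalar ((of_real q^1 * of_real s^1) - (of_real q^1 * of_real s^3)) * rel1 q * single [Al,GaS] 1
    + scalar ((of_real q^1 * of_real s^2)) * rel1 q * single [Al,Al] 1
    + single [Al] ((of_real s^2)) * rel1 q * single [Al] 1"
    unfolding certificate_unfold
    by (rule of_terms_eqI, simp add: terms_collect_def)
       (simp add: field_simps power2_eq_square power3_eq_cube power4_eq_xxxx)
  also have "\<dots> \<in> rel_ideal q"
    by (intro rel_ideal.add rel_ideal_relI rels_in_suq_rels)
  finally show ?thesis by (simp add: hcong_def)
qed

lemma Kh_Lh_adj_commute:
  assumes "q \<noteq> 0"
  shows "hcong q (Kh s * Lh_adj s q) (scalar (of_real q ^ 2) * Lh_adj s q * Kh s)"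
proof -
  have "Kh s * Lh_adj s q - (scalar (of_real q ^ 2) * Lh_adj s q * Kh s) =
    single [AlS] ((of_real s^2)) * rel6 q * single [AlS] 1
    + single [AlS,AlS] ((of_real q^1 * of_real s^2)) * rel6 q * scalar 1
    + single [AlS] (- (of_real s^1) + (of_real s^3)) * rel3 * single [AlS] 1
    + single [AlS,Ga] ((of_real s^1) - (of_real s^3) + (of_real q^2 * of_real s^1) - (of_real q^2 * of_real s^3)) * rel6 q * scalar 1
    + single [AlS] ((of_real q^1 * of_real s^1) - (of_real q^1 * of_real s^3)) * rel7 q * single [GaS] 1
    + single [AlS,Ga] ((of_real q^3) - (2 * of_real q^3 * of_real s^2) + (of_real q^3 * of_real s^4)) * rel3 * scalar 1
    + scalar (- (of_real s^1) + (of_real s^3)) * rel3 * single [AlS,AlS] 1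
    + scalar (- (1) + (2 * of_real s^2) - (of_real s^4)) * rel3 * single [Ga,AlS] 1
    + single [Ga] ((of_real s^1) - (of_real s^3)) * rel6 q * single [AlS] 1
    + scalar ((of_real q^1 * of_real s^1) - (of_real q^1 * of_real s^3)) * rel7 q * single [GaS,AlS] 1
    + single [Ga] (- (1) + (2 * of_real s^2) - (of_real s^4) + (of_real q^2 * of_real s^2)) * rel3 * single [AlS] 1
    + single [Ga] ((of_real q^3 * of_real s^1) - (of_real q^3 * of_real s^3)) * rel3 * single [Ga] 1
    + scalar (- (inverse (of_real q)^1 * of_real s^2)) * rel1 q * single [AlS,AlS] 1
    + single [Al] ((inverse (of_real q)^1 * of_real s^2)) * rel7 q * single [AlS] 1
    + scalar ((of_real s^2)) * rel5 q * single [Ga,AlS] 1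
    + scalar ((of_real s^2)) * rel7 q * scalar 1
    + scalar (- (inverse (of_real q)^1 * of_real s^1) + (inverse (of_real q)^1 * of_real s^3)) * rel1 q * single [Ga,AlS] 1
    + single [Al,Ga] ((inverse (of_real q)^1 * of_real s^1) - (inverse (of_real q)^1 * of_real s^3)) * rel7 q * scalar 1
    + single [Al] ((of_real s^1) - (of_real s^3)) * rel7 q * single [Ga] 1
    + scalar ((of_real q^1 * of_real s^1) - (of_real q^1 * of_real s^3)) * rel5 q * single [Ga,Ga] 1
    + single [Ga,Ga] ((1) - (2 * of_real s^2) + (of_real s^4) - (of_real q^2 * of_real s^2)) * rel6 q * scalar 1
    + single [Ga] ((of_real q^1) - (2 * of_real q^1 * of_real s^2) + (of_real q^1 * of_real s^4)) * rel7 q * single [GaS] 1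
    + scalar ((of_real q^2) - (2 * of_real q^2 * of_real s^2) + (of_real q^2 * of_real s^4)) * rel7 q * single [Ga,GaS] 1
    + single [AlS,AlS] ((of_real q^2 * of_real s^1) - (of_real q^2 * of_real s^3)) * rel3 * scalar 1
    + single [AlS,AlS] ((of_real q^1 * of_real s^2)) * rel1 q * scalar 1
    + single [AlS] (- (of_real q^1 * of_real s^2)) * rel4 * single [Ga] 1
    + scalar (- (of_real q^2 * of_real s^1) + (of_real q^2 * of_real s^3)) * rel7 q * single [AlS,GaS] 1
    + scalar (- (of_real q^2) + (2 * of_real q^2 * of_real s^2) - (of_real q^2 * of_real s^4)) * rel7 q * single [GaS,Ga] 1
    + scalar (- (of_real q^2 * of_real s^1) + (of_real q^2 * of_real s^3)) * rel7 q * single [Ga,Al] 1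
    + single [AlS,Ga] ((of_real q^2 * of_real s^1) - (of_real q^2 * of_real s^3)) * rel1 q * scalar 1
    + single [AlS] ((of_real q^1 * of_real s^1) - (of_real q^1 * of_real s^3)) * rel1 q * single [Ga] 1
    + scalar (- (of_real q^1 * of_real s^1) + (of_real q^1 * of_real s^3)) * rel4 * single [Ga,Ga] 1
    + single [Ga,Ga] (- (of_real q^2 * of_real s^2)) * rel1 q * scalar 1
    + single [Ga] (- (of_real q^1 * of_real s^2)) * rel1 q * single [Ga] 1"
    unfolding certificate_unfold
    by (rule of_terms_eqI, simp add: terms_collect_def)
       (simp add: field_simps power2_eq_square power3_eq_cube power4_eq_xxxx assms)
  also have "\<dots> \<in> rel_ideal q"
    by (intro rel_ideal.add rel_ideal_relI rels_in_suq_rels)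
  finally show ?thesis by (simp add: hcong_def)
qed

lemma Lh_adj_Lh:
  assumes "q \<noteq> 0"
  shows "hcong q (Lh_adj s q * Lh s q) (scalar (of_real s ^ 2) + scalar (1 - of_real s ^ 2) * Kh s - Kh s * Kh s)"
proof -
  have "Lh_adj s q * Lh s q - (scalar (of_real s ^ 2) + scalar (1 - of_real s ^ 2) * Kh s - Kh s * Kh s) =
    single [AlS] ((of_real s^1) - (of_real s^3)) * rel4 * single [GaS] 1
    + single [AlS] ((of_real s^2)) * rel4 * single [Al] 1
    + scalar ((of_real s^2)) * rel4 * scalar 1
    + scalar ((1) - (of_real s^2) + (of_real s^4)) * rel3 * scalar 1
    + single [AlS] (- (1) + (2 * of_real s^2) - (of_real s^4)) * rel1 q * single [GaS] 1
    + scalar ((1) - (2 * of_real s^2) + (of_real s^4)) * rel4 * single [Ga,GaS] 1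
    + scalar ((1) - (2 * of_real s^2) + (of_real s^4)) * rel3 * single [Ga,GaS] 1
    + scalar ((1) - (2 * of_real s^2) + (of_real s^4)) * rel7 q * single [Al,GaS] 1
    + scalar ((of_real s^1) - (of_real s^3)) * rel7 q * single [Al,Al] 1
    + single [AlS] (- (of_real s^1) + (of_real s^3)) * rel1 q * single [Al] 1
    + scalar ((of_real s^1) - (of_real s^3)) * rel4 * single [Ga,Al] 1
    + single [Ga] ((of_real q^2 * of_real s^2)) * rel3 * single [GaS] 1
    + single [Ga] ((of_real s^1) - (of_real s^3)) * rel1 q * single [GaS] 1
    + scalar ((inverse (of_real q)^1 * of_real s^1) - (inverse (of_real q)^1 * of_real s^3)) * rel1 q * single [Ga,GaS] 1
    + single [Ga] ((of_real s^2)) * rel1 q * single [Al] 1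
    + single [AlS] ((of_real s^2)) * rel6 q * single [GaS] 1
    + single [AlS,GaS] (- (of_real s^1) + (of_real s^3)) * rel3 * scalar 1
    + scalar (- (of_real s^1) + (of_real s^3)) * rel3 * single [AlS,GaS] 1
    + scalar (- (1) + (2 * of_real s^2) - (of_real s^4)) * rel3 * single [GaS,Ga] 1
    + single [Ga] ((of_real s^1) - (of_real s^3)) * rel6 q * single [GaS] 1
    + single [Ga,GaS] (- (1) + (2 * of_real s^2) - (of_real s^4)) * rel3 * scalar 1
    + scalar (- (inverse (of_real q)^1 * of_real s^2)) * rel1 q * single [AlS,GaS] 1
    + single [Al] ((inverse (of_real q)^1 * of_real s^2)) * rel7 q * single [GaS] 1
    + scalar ((of_real s^2)) * rel5 q * single [Ga,GaS] 1
    + scalar (- (inverse (of_real q)^1 * of_real s^1) + (inverse (of_real q)^1 * of_real s^3)) * rel1 q * single [GaS,Ga] 1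
    + single [Al,Ga] (- (inverse (of_real q)^1 * of_real s^1) + (inverse (of_real q)^1 * of_real s^3)) * rel3 * scalar 1"
    unfolding certificate_unfold
    by (rule of_terms_eqI, simp add: terms_collect_def)
       (simp add: field_simps power2_eq_square power3_eq_cube power4_eq_xxxx assms)
  also have "\<dots> \<in> rel_ideal q"
    by (intro rel_ideal.add rel_ideal_relI rels_in_suq_rels)
  finally show ?thesis by (simp add: hcong_def)
qed

lemma Lh_Lh_adj:
  "hcong q (Lh s q * Lh_adj s q)
      (scalar (of_real s ^ 2) + scalar ((1 - of_real s ^ 2) * of_real q ^ 2) * Kh s
        - scalar (of_real q ^ 4) * (Kh s * Kh s))"
proof -
  have "Lh s q * Lh_adj s q - (scalar (of_real s ^ 2) + scalar ((1 - of_real s ^ 2) * of_real q ^ 2) * Kh s - scalar (of_real q ^ 4) * (Kh s * Kh s)) =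
    single [GaS] (- (of_real q^1 * of_real s^2)) * rel6 q * single [AlS] 1
    + scalar (- (of_real q^2 * of_real s^2)) * rel6 q * single [GaS,AlS] 1
    + single [AlS,GaS] (- (of_real q^3 * of_real s^2)) * rel6 q * scalar 1
    + single [GaS] ((of_real q^1 * of_real s^1) - (of_real q^1 * of_real s^3)) * rel3 * single [AlS] 1
    + single [GaS] (- (of_real q^2 * of_real s^2)) * rel3 * single [Ga] 1
    + scalar ((of_real q^1 * of_real s^1) - (of_real q^1 * of_real s^3)) * rel3 * single [GaS,AlS] 1
    + scalar (- (of_real q^2 * of_real s^2) - (of_real q^4) + (2 * of_real q^4 * of_real s^2) - (of_real q^4 * of_real s^4)) * rel3 * single [GaS,Ga] 1
    + single [Al] ((of_real s^1) - (of_real s^3)) * rel6 q * single [AlS] 1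
    + scalar ((of_real q^1 * of_real s^1) - (of_real q^1 * of_real s^3)) * rel5 q * single [GaS,AlS] 1
    + scalar ((of_real q^1 * of_real s^1) - (of_real q^1 * of_real s^3)) * rel6 q * scalar 1
    + single [Al] (- (1) + (2 * of_real s^2) - (of_real s^4)) * rel3 * single [AlS] 1
    + single [Al] ((of_real q^1 * of_real s^1) - (of_real q^1 * of_real s^3)) * rel3 * single [Ga] 1
    + single [Al] ((of_real s^2)) * rel5 q * single [AlS] 1
    + scalar ((of_real s^2)) * rel5 q * scalar 1
    + single [Al,Al] ((of_real s^1) - (of_real s^3)) * rel7 q * scalar 1
    + single [Al] ((of_real q^1 * of_real s^1) - (of_real q^1 * of_real s^3)) * rel5 q * single [Ga] 1
    + single [Al,Ga] ((1) - (2 * of_real s^2) + (of_real s^4) - (of_real q^2 * of_real s^2)) * rel6 q * scalar 1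
    + single [Al] ((of_real q^1) - (2 * of_real q^1 * of_real s^2) + (of_real q^1 * of_real s^4)) * rel7 q * single [GaS] 1
    + scalar ((of_real q^2) - (2 * of_real q^2 * of_real s^2) + (of_real q^2 * of_real s^4)) * rel5 q * single [Ga,GaS] 1
    + single [Al,Ga] ((of_real q^1 * of_real s^1) - (of_real q^1 * of_real s^3)) * rel3 * scalar 1
    + single [Ga,GaS] (- (of_real q^1 * of_real s^1) + (of_real q^1 * of_real s^3) - (of_real q^3 * of_real s^1) + (of_real q^3 * of_real s^3)) * rel6 q * scalar 1
    + single [Ga] (- (of_real q^2 * of_real s^1) + (of_real q^2 * of_real s^3)) * rel6 q * single [GaS] 1
    + scalar (- (of_real q^3 * of_real s^1) + (of_real q^3 * of_real s^3)) * rel7 q * single [GaS,GaS] 1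
    + single [Ga,GaS] (- (of_real q^2 * of_real s^2) - (of_real q^4) + (2 * of_real q^4 * of_real s^2) - (of_real q^4 * of_real s^4)) * rel3 * scalar 1
    + single [AlS,GaS] (- (of_real q^4 * of_real s^1) + (of_real q^4 * of_real s^3)) * rel3 * scalar 1
    + single [AlS] (- (of_real q^4 * of_real s^1) + (of_real q^4 * of_real s^3)) * rel3 * single [GaS] 1
    + single [AlS] (- (of_real q^4 * of_real s^2)) * rel3 * single [Al] 1
    + single [AlS,Ga] (- (of_real q^3 * of_real s^2)) * rel2 q * scalar 1
    + single [AlS] (- (of_real q^2 * of_real s^2)) * rel1 q * single [GaS] 1
    + scalar ((of_real q^2 * of_real s^2)) * rel4 * single [Ga,GaS] 1
    + scalar ((of_real q^2 * of_real s^2)) * rel3 * single [Ga,GaS] 1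
    + scalar ((of_real q^2) - (2 * of_real q^2 * of_real s^2) + (of_real q^2 * of_real s^4)) * rel3 * scalar 1
    + scalar (- (of_real q^4 * of_real s^1) + (of_real q^4 * of_real s^3)) * rel3 * single [AlS,GaS] 1
    + scalar (- (of_real q^4 * of_real s^1) + (of_real q^4 * of_real s^3)) * rel3 * single [Ga,Al] 1
    + single [Ga] (- (of_real q^4 * of_real s^1) + (of_real q^4 * of_real s^3)) * rel3 * single [Al] 1
    + scalar ((of_real q^1 * of_real s^1) - (of_real q^1 * of_real s^3)) * rel1 q * scalar 1
    + scalar (- (of_real q^3 * of_real s^2)) * rel1 q * single [AlS,GaS] 1
    + scalar (- (of_real q^3 * of_real s^1) + (of_real q^3 * of_real s^3)) * rel1 q * single [GaS,Ga] 1
    + scalar (- (of_real q^3 * of_real s^2)) * rel1 q * single [Ga,Al] 1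
    + single [Al,Ga] (- (of_real q^2 * of_real s^2)) * rel1 q * scalar 1
    + single [Al] (- (of_real q^1 * of_real s^2)) * rel1 q * single [Ga] 1
    + single [Ga,Ga] (- (of_real q^3 * of_real s^1) + (of_real q^3 * of_real s^3)) * rel2 q * scalar 1
    + single [Ga] (- (of_real q^2 * of_real s^1) + (of_real q^2 * of_real s^3)) * rel1 q * single [GaS] 1
    + scalar (- (of_real q^1 * of_real s^1) + (of_real q^1 * of_real s^3)) * rel1 q * single [Ga,GaS] 1"
    unfolding certificate_unfold
    by (rule of_terms_eqI, simp add: terms_collect_def)
       (simp add: field_simps power2_eq_square power3_eq_cube power4_eq_xxxx)
  also have "\<dots> \<in> rel_ideal q"
    by (intro rel_ideal.add rel_ideal_relI rels_in_suq_rels)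
  finally show ?thesis by (simp add: hcong_def)
qed

section \<open>A projection built from the powers of L\<close>

definition podles_poly :: "real \<Rightarrow> complex poly" where
  "podles_poly s = [:of_real s ^ 2, 1 - of_real s ^ 2, -1:]"

definition podles_poly_prod :: "real \<Rightarrow> real \<Rightarrow> nat \<Rightarrow> complex poly" where
  "podles_poly_prod s q N = (\<Prod>j=1..N. rescale ((of_real q ^ 2) ^ j) (podles_poly s))"

definition idempotent_mod :: "real \<Rightarrow> nat \<Rightarrow> (nat \<Rightarrow> nat \<Rightarrow> hgen free_alg) \<Rightarrow> bool" where
  "idempotent_mod q n P \<longleftrightarrow> (\<forall>i<n. \<forall>j<n. hcong q (\<Sum>k<n. P i k * P k j) (P i j))"

definition block2 :: "'a \<Rightarrow> 'a \<Rightarrow> 'a \<Rightarrow> 'a \<Rightarrow> nat \<Rightarrow> nat \<Rightarrow> 'a" where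
  "block2 a b c d i j = (if i = 0 then if j = 0 then a else b else if j = 0 then c else d)"

lemma idempotent_mod_block2I:
  assumes "hcong q (a * a + b * c) a" "hcong q (a * b + b * d) b"
    and "hcong q (c * a + d * c) c" "hcong q (c * b + d * d) d"
  shows "idempotent_mod q 2 (block2 a b c d)"
  using assms by (auto simp: idempotent_mod_def block2_def numeral_2_eq_2 less_Suc_eq)

locale podles_sphere =
  fixes s q :: real
  assumes q_nonzero: "q \<noteq> 0"
begin

abbreviation K where "K \<equiv> Kh s"
abbreviation L where "L \<equiv> Lh s q"
abbreviation Ls where "Ls \<equiv> Lh_adj s q"
abbreviation q2 where "q2 \<equiv> complex_of_real q ^ 2"

lemma q2_inverse: "inverse q2 ^ N * q2 ^ N = 1"
  using q_nonzero by (simp flip: power_mult_distrib)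

lemma Ls_K_commute: "hcong q (Ls * K) (scalar (inverse q2) * K * Ls)"
proof -
  have "hcong q (scalar (inverse q2) * (K * Ls)) (scalar (inverse q2) * (scalar q2 * Ls * K))"
    using Kh_Lh_adj_commute[OF q_nonzero] by (rule hcong_mult_left)
  also have "scalar (inverse q2) * (scalar q2 * Ls * K) = Ls * K"
    using q_nonzero by (simp add: mult.assoc scalar_mult_left scalar_one)
  finally show ?thesis by (simp add: mult.assoc hcong_sym)
qed

lemma L_Ls: "hcong q (L * Ls) (alg_poly (rescale q2 (podles_poly s)) K)"
proof -
  have "rescale q2 (podles_poly s) = [:of_real s ^ 2, (1 - of_real s ^ 2) * of_real q ^ 2, - (of_real q ^ 4):]"
    by (simp add: podles_poly_def rescale_quadratic mult.commute flip: power_mult)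
  then show ?thesis
    using Lh_Lh_adj[of q s] by (simp add: alg_poly_quadratic)
qed

lemma Ls_L: "hcong q (Ls * L) (alg_poly (podles_poly s) K)"
  using Lh_adj_Lh[OF q_nonzero, of s] by (simp add: podles_poly_def alg_poly_quadratic scalar_one)

lemma L_power_Ls_power: "hcong q (L ^ N * Ls ^ N) (alg_poly (podles_poly_prod s q N) K)"
proof (induction N)
  case 0
  then show ?case by (simp add: podles_poly_prod_def alg_poly_1)
next
  case (Suc N)
  let ?phi = "rescale (q2 ^ Suc N) (podles_poly s)"
  have "L ^ Suc N * Ls ^ Suc N = L ^ N * (L * Ls) * Ls ^ N"
    by (simp only: power_Suc2[of L] power_Suc[of Ls] mult.assoc)
  also have "hcong q \<dots> (L ^ N * alg_poly (rescale q2 (podles_poly s)) K * Ls ^ N)"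
    by (intro hcong_mult_right hcong_mult_left L_Ls)
  also have "hcong q \<dots> (alg_poly (rescale (q2 ^ N) (rescale q2 (podles_poly s))) K * L ^ N * Ls ^ N)"
    by (rule hcong_mult_right) (rule hcong_power_commute_alg_poly[OF Lh_Kh_commute])
  also have "\<dots> = alg_poly ?phi K * L ^ N * Ls ^ N"
    by (simp add: rescale_rescale mult.commute)
  also have "hcong q \<dots> (alg_poly ?phi K * alg_poly (podles_poly_prod s q N) K)"
    unfolding mult.assoc by (rule hcong_mult_left) (rule Suc.IH)
  also have "\<dots> = alg_poly (podles_poly_prod s q (Suc N)) K"
    by (simp add: podles_poly_prod_def prod.nat_ivl_Suc' mult.commute flip: alg_poly_mult)
  finally show ?case .
qed

lemma Ls_power_L_power:
  "hcong q (Ls ^ N * L ^ N) (alg_poly (rescale (inverse q2 ^ N) (podles_poly_prod s q N)) K)"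
proof (induction N)
  case 0
  then show ?case by (simp add: podles_poly_prod_def alg_poly_1)
next
  case (Suc N)
  let ?p = "rescale (inverse q2 ^ N) (podles_poly_prod s q N)"
  have "Ls ^ Suc N * L ^ Suc N = Ls * (Ls ^ N * L ^ N) * L"
    by (simp only: power_Suc2[of L] power_Suc[of Ls] mult.assoc)
  also have "hcong q \<dots> (Ls * alg_poly ?p K * L)"
    by (intro hcong_mult_right hcong_mult_left Suc.IH)
  also have "hcong q \<dots> (alg_poly (rescale (inverse q2) ?p) K * (Ls * L))"
    unfolding mult.assoc[symmetric]
    by (rule hcong_mult_right) (rule hcong_commute_alg_poly[OF Ls_K_commute])
  also have "hcong q \<dots> (alg_poly (rescale (inverse q2) ?p) K * alg_poly (podles_poly s) K)"
    by (rule hcong_mult_left) (rule Ls_L)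
  also have "\<dots> = alg_poly (rescale (inverse q2 ^ Suc N) (podles_poly_prod s q (Suc N))) K"
  proof -
    have phi: "rescale (inverse q2 ^ Suc N) (rescale (q2 ^ Suc N) (podles_poly s)) = podles_poly s"
      by (simp only: rescale_rescale q2_inverse rescale_by_1)
    have "podles_poly_prod s q (Suc N) = rescale (q2 ^ Suc N) (podles_poly s) * podles_poly_prod s q N"
      by (simp add: podles_poly_prod_def prod.nat_ivl_Suc' del: power_Suc)
    then have "rescale (inverse q2 ^ Suc N) (podles_poly_prod s q (Suc N)) =
        podles_poly s * rescale (inverse q2 ^ Suc N) (podles_poly_prod s q N)"
      by (simp only: rescale_mult phi)
    then show ?thesis
      by (simp add: rescale_rescale mult.commute flip: alg_poly_mult)
  qed
  finally show ?case .
qed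

lemma L_power_alg_poly_commute:
  "hcong q (L ^ N * alg_poly (rescale (inverse q2 ^ N) p) K) (alg_poly p K * L ^ N)"
proof -
  have "rescale (q2 ^ N) (rescale (inverse q2 ^ N) p) = p"
    using q2_inverse[of N] by (simp add: rescale_rescale mult.commute)
  then show ?thesis
    using hcong_power_commute_alg_poly[OF Lh_Kh_commute[of q s],
        where N = N and p = "rescale (inverse q2 ^ N) p"]
    by simp
qed

lemma Ls_power_alg_poly_commute:
  "hcong q (Ls ^ N * alg_poly p K) (alg_poly (rescale (inverse q2 ^ N) p) K * Ls ^ N)"
  by (rule hcong_power_commute_alg_poly[OF Ls_K_commute])

lemma podles_block_idempotent:
  assumes AW: "A * (1 - A) = W * podles_poly_prod s q N"
  defines "r \<equiv> inverse q2 ^ N"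
  shows "idempotent_mod q 2 (block2 (alg_poly A K) (L ^ N)
           (alg_poly (rescale r W) K * Ls ^ N) (alg_poly (1 - rescale r A) K))"
proof (rule idempotent_mod_block2I)
  let ?C = "rescale r W" and ?D = "1 - rescale r A" and ?P = "podles_poly_prod s q N"
  show "hcong q (alg_poly A K * alg_poly A K + L ^ N * (alg_poly ?C K * Ls ^ N)) (alg_poly A K)"
  proof -
    have "hcong q (L ^ N * alg_poly ?C K * Ls ^ N) (alg_poly W K * (L ^ N * Ls ^ N))"
      using hcong_mult_right[OF L_power_alg_poly_commute[of N W]] by (simp add: r_def mult.assoc)
    also have "hcong q \<dots> (alg_poly W K * alg_poly ?P K)"
      by (rule hcong_mult_left) (rule L_power_Ls_power)
    finally have "hcong q (alg_poly A K * alg_poly A K + L ^ N * (alg_poly ?C K * Ls ^ N))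
        (alg_poly (A * A + W * ?P) K)"
      by (simp add: alg_poly_add alg_poly_mult mult.assoc hcong_add)
    also have "A * A + W * ?P = A"
      using AW by (simp add: algebra_simps)
    finally show ?thesis .
  qed
  show "hcong q (alg_poly A K * L ^ N + L ^ N * alg_poly ?D K) (L ^ N)"
  proof -
    have "hcong q (alg_poly A K * L ^ N + L ^ N * alg_poly ?D K)
        (alg_poly A K * L ^ N + alg_poly (1 - A) K * L ^ N)"
      using L_power_alg_poly_commute[of N "1 - A"] by (simp add: r_def rescale_diff hcong_add)
    also have "alg_poly A K * L ^ N + alg_poly (1 - A) K * L ^ N = L ^ N"
      by (simp add: alg_poly_diff alg_poly_1 algebra_simps)
    finally show ?thesis .
  qed
  show "hcong q (alg_poly ?C K * Ls ^ N * alg_poly A K + alg_poly ?D K * (alg_poly ?C K * Ls ^ N))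
      (alg_poly ?C K * Ls ^ N)"
  proof -
    have "hcong q (alg_poly ?C K * Ls ^ N * alg_poly A K) (alg_poly ?C K * alg_poly (rescale r A) K * Ls ^ N)"
      using hcong_mult_left[OF Ls_power_alg_poly_commute[of N A]] by (simp add: r_def mult.assoc)
    then have "hcong q (alg_poly ?C K * Ls ^ N * alg_poly A K + alg_poly ?D K * (alg_poly ?C K * Ls ^ N))
        (alg_poly (?C * rescale r A + ?D * ?C) K * Ls ^ N)"
      by (simp add: alg_poly_add alg_poly_mult distrib_right mult.assoc hcong_add)
    also have "?C * rescale r A + ?D * ?C = ?C"
      by (simp add: algebra_simps)
    finally show ?thesis .
  qed
  show "hcong q (alg_poly ?C K * Ls ^ N * L ^ N + alg_poly ?D K * alg_poly ?D K) (alg_poly ?D K)"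
  proof -
    have "hcong q (alg_poly ?C K * Ls ^ N * L ^ N) (alg_poly ?C K * alg_poly (rescale r ?P) K)"
      unfolding mult.assoc r_def by (rule hcong_mult_left) (rule Ls_power_L_power)
    then have "hcong q (alg_poly ?C K * Ls ^ N * L ^ N + alg_poly ?D K * alg_poly ?D K)
        (alg_poly (?C * rescale r ?P + ?D * ?D) K)"
      by (simp add: alg_poly_add alg_poly_mult hcong_add)
    also have "?C * rescale r ?P + ?D * ?D = ?D"
    proof -
      have "(1 - ?D) * ?D = ?C * rescale r ?P"
        using arg_cong[OF AW, of "rescale r"] by (simp add: rescale_mult rescale_diff)
      then show ?thesis by (simp add: algebra_simps)
    qed
    finally show ?thesis .
  qed
qed
end

section \<open>A polynomial separating the spectra of the two representations of K\<close>

lemma coprime_linear_polys: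
  fixes a b c :: "'a::field"
  assumes "a + b * c \<noteq> 0"
  shows "coprime [:c, a:] [:1, - b:]"
proof (rule coprimeI)
  fix d assume "d dvd [:c, a:]" "d dvd [:1, - b:]"
  then have "d dvd [:c, a:] * [:b:] + [:1, - b:] * [:a:]"
    by (intro dvd_add dvd_mult2)
  also have "[:c, a:] * [:b:] + [:1, - b:] * [:a:] = [:a + b * c:]"
    by (simp add: algebra_simps)
  finally show "is_unit d"
    using assms is_unit_triv dvd_unit_imp_unit by blast
qed

context podles_sphere
begin

lemma podles_poly_prod_factors:
  "podles_poly_prod s q N =
     (\<Prod>j=1..N. [:of_real s ^ 2, q2 ^ j:]) * (\<Prod>j=1..N. [:1, - (q2 ^ j):])"
proof -
  have factor: "rescale a (podles_poly s) = [:of_real s ^ 2, a:] * [:1, - a:]" for a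
    by (simp add: podles_poly_def rescale_quadratic algebra_simps power2_eq_square)
  show ?thesis
    by (simp only: podles_poly_prod_def factor prod.distrib)
qed

lemma coprime_podles_factors:
  "coprime (\<Prod>j=1..N. [:of_real s ^ 2, q2 ^ j:]) (\<Prod>j=1..N. [:1, - (q2 ^ j):])"
proof (intro prod_coprime_left prod_coprime_right coprime_linear_polys)
  fix i j :: nat
  have "0 < (q ^ 2) ^ i + (q ^ 2) ^ j * s ^ 2"
    using q_nonzero by (intro add_pos_nonneg) simp_all
  then have "complex_of_real ((q ^ 2) ^ i + (q ^ 2) ^ j * s ^ 2) \<noteq> 0"
    by (metis of_real_eq_0_iff less_irrefl)
  then show "q2 ^ i + q2 ^ j * of_real s ^ 2 \<noteq> 0"
    by simp
qed

lemma separating_poly: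
  obtains A W where "A * (1 - A) = W * podles_poly_prod s q N"
    and "\<And>j. j \<in> {1..N} \<Longrightarrow> poly A (inverse q2 ^ j) = 1"
    and "\<And>j. j \<in> {1..N} \<Longrightarrow> poly A (- (of_real s ^ 2) * inverse q2 ^ j) = 0"
proof -
  let ?V = "\<Prod>j=1..N. [:of_real s ^ 2, q2 ^ j:]" and ?U = "\<Prod>j=1..N. [:1, - (q2 ^ j):]"
  obtain x y where xy: "x * ?V + y * ?U = 1"
    using bezout_coefficients_fst_snd[of ?V ?U] coprime_podles_factors by auto
  have "inverse q2 ^ j * q2 ^ j = 1" "q2 ^ j * inverse q2 ^ j = 1" for j
    using q2_inverse[of j] by (simp_all add: mult.commute)
  then have U_root: "poly ?U (inverse q2 ^ j) = 0"
    and V_root: "poly ?V (- (of_real s ^ 2) * inverse q2 ^ j) = 0" if "j \<in> {1..N}" for j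
    using that by (auto simp: poly_prod prod_zero_iff intro!: bexI[of _ j] simp flip: mult.assoc)
  show thesis
  proof
    have "1 - x * ?V = y * ?U"
      using xy by (simp add: algebra_simps)
    then show "(x * ?V) * (1 - x * ?V) = (x * y) * podles_poly_prod s q N"
      by (simp add: podles_poly_prod_factors ac_simps)
    fix j assume "j \<in> {1..N}"
    show "poly (x * ?V) (inverse q2 ^ j) = 1"
      using arg_cong[OF xy, of "\<lambda>p. poly p (inverse q2 ^ j)"] U_root[OF \<open>j \<in> {1..N}\<close>] by simp
    show "poly (x * ?V) (- (of_real s ^ 2) * inverse q2 ^ j) = 0"
      using V_root[OF \<open>j \<in> {1..N}\<close>] by simp
  qed
qed

lemma poly_with_jump_sum:
  obtains A W where "A * (1 - A) = W * podles_poly_prod s q (nat \<bar>b\<bar>)"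
    and "(\<Sum>j=1..nat \<bar>b\<bar>. poly A (inverse q2 ^ j) - poly A (- (of_real s ^ 2) * inverse q2 ^ j)) =
      of_int b"
proof -
  obtain A0 W where AW0: "A0 * (1 - A0) = W * podles_poly_prod s q (nat \<bar>b\<bar>)"
    and one: "\<And>j. j \<in> {1..nat \<bar>b\<bar>} \<Longrightarrow> poly A0 (inverse q2 ^ j) = 1"
    and zero: "\<And>j. j \<in> {1..nat \<bar>b\<bar>} \<Longrightarrow> poly A0 (- (of_real s ^ 2) * inverse q2 ^ j) = 0"
    using separating_poly by blast
  define A where "A = (if 0 \<le> b then A0 else 1 - A0)"
  show thesis
  proof
    have "A * (1 - A) = A0 * (1 - A0)"
      by (simp add: A_def algebra_simps)
    then show "A * (1 - A) = W * podles_poly_prod s q (nat \<bar>b\<bar>)"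
      by (simp only: AW0)
    have "poly A (inverse q2 ^ j) - poly A (- (of_real s ^ 2) * inverse q2 ^ j) = (if 0 \<le> b then 1 else - 1)"
      if "j \<in> {1..nat \<bar>b\<bar>}" for j
      using one[OF that] zero[OF that] by (simp add: A_def)
    then show "(\<Sum>j=1..nat \<bar>b\<bar>. poly A (inverse q2 ^ j) - poly A (- (of_real s ^ 2) * inverse q2 ^ j)) =
        of_int b"
      by simp
  qed
qed

end

section \<open>The trace of a polynomial in K\<close>

lemma has_sum_geometric:
  fixes z :: "'a::{real_normed_field,banach}"
  assumes "norm z < 1"
  shows "((\<lambda>n. z ^ n) has_sum (1 / (1 - z))) UNIV"
  using assms geometric_sums[OF assms]
  by (intro norm_summable_imp_has_sum) (simp_all add: norm_power summable_geometric)

lemma has_sum_finite_sum: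
  fixes f :: "'i \<Rightarrow> 'a \<Rightarrow> 'b::topological_comm_monoid_add"
  assumes "finite I" "\<And>i. i \<in> I \<Longrightarrow> (f i has_sum a i) A"
  shows "((\<lambda>x. \<Sum>i\<in>I. f i x) has_sum (\<Sum>i\<in>I. a i)) A"
  using assms by (induction I rule: finite_induct) (simp_all add: has_sum_add)

definition trace_weight :: "real \<Rightarrow> real \<Rightarrow> nat \<Rightarrow> complex" where
  "trace_weight s q i = ((- (of_real s ^ 2)) ^ i - 1) / (1 - (of_real q ^ 2) ^ i)"

definition podles_trace :: "real \<Rightarrow> real \<Rightarrow> complex poly \<Rightarrow> complex" where
  "podles_trace s q p = (\<Sum>i\<le>degree p. coeff p i * trace_weight s q i)"

lemma podles_trace_upto:
  "degree p \<le> n \<Longrightarrow> podles_trace s q p = (\<Sum>i\<le>n. coeff p i * trace_weight s q i)"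
  unfolding podles_trace_def by (rule sum.mono_neutral_left) (auto simp: coeff_eq_0)

lemma trace_weight_0 [simp]: "trace_weight s q 0 = 0"
  by (simp add: trace_weight_def)

lemma podles_trace_1 [simp]: "podles_trace s q 1 = 0"
  by (simp add: podles_trace_def)

locale podles_sphere_trace = podles_sphere +
  assumes q_pos: "0 < q" and q_less_1: "q < 1"
begin

lemma norm_q2_power_less_1: "i \<noteq> 0 \<Longrightarrow> norm (q2 ^ i) < 1"
  using q_pos q_less_1 by (simp add: norm_power power_less_one_iff abs_square_less_1)

lemma has_sum_podles_trace:
  "((\<lambda>n. poly p (complex_of_real (- (s ^ 2 * q ^ (2 * n)))) - poly p (complex_of_real (q ^ (2 * n))))
     has_sum podles_trace s q p) UNIV"
proof -
  let ?c = "\<lambda>i. coeff p i * ((- (of_real s ^ 2)) ^ i - 1)"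
  have "poly p (complex_of_real (- (s ^ 2 * q ^ (2 * n)))) - poly p (complex_of_real (q ^ (2 * n)))
      = (\<Sum>i\<le>degree p. ?c i * (q2 ^ i) ^ n)" for n
  proof -
    have swap: "(x ^ n) ^ i = (x ^ i) ^ n" for x :: complex and i
      by (metis power_mult mult.commute)
    have "complex_of_real (- (s ^ 2 * q ^ (2 * n))) = - (of_real s ^ 2) * q2 ^ n"
      and "complex_of_real (q ^ (2 * n)) = q2 ^ n"
      by (simp_all add: power_mult)
    then have "complex_of_real (- (s ^ 2 * q ^ (2 * n))) ^ i = (- (of_real s ^ 2)) ^ i * (q2 ^ i) ^ n"
      and "complex_of_real (q ^ (2 * n)) ^ i = (q2 ^ i) ^ n" for i
      by (simp_all only: power_mult_distrib swap)
    then show ?thesis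
      by (simp add: poly_altdef algebra_simps flip: sum_subtractf)
  qed
  moreover have "((\<lambda>n. \<Sum>i\<le>degree p. ?c i * (q2 ^ i) ^ n) has_sum podles_trace s q p) UNIV"
    unfolding podles_trace_def
  proof (rule has_sum_finite_sum)
    fix i
    show "((\<lambda>n. ?c i * (q2 ^ i) ^ n) has_sum coeff p i * trace_weight s q i) UNIV"
    proof (cases "i = 0")
      case False
      have "((\<lambda>n. ?c i * (q2 ^ i) ^ n) has_sum ?c i * (1 / (1 - q2 ^ i))) UNIV"
        by (intro has_sum_cmult_right has_sum_geometric norm_q2_power_less_1 False)
      then show ?thesis by (simp add: trace_weight_def)
    qed (simp add: trace_weight_def)
  qed simp
  ultimately show ?thesis by simp
qed

lemma trace_weight_telescope:
  "(1 - (inverse q2 ^ N) ^ i) * trace_weight s q i =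
     (\<Sum>j=1..N. (inverse q2 ^ j) ^ i - (- (of_real s ^ 2) * inverse q2 ^ j) ^ i)"
proof (cases "i = 0")
  case False
  define t where "t = inverse q2 ^ i"
  define a :: complex where "a = (- (of_real s ^ 2)) ^ i"
  have "norm (q2 ^ i) < 1"
    using False by (rule norm_q2_power_less_1)
  then have t: "t \<noteq> 0" "t \<noteq> 1" "q2 ^ i = inverse t"
    using q_nonzero by (auto simp: t_def power_inverse)
  have swap: "(inverse q2 ^ j) ^ i = t ^ j" for j
    unfolding t_def by (metis power_mult mult.commute)
  have "(\<Sum>j=1..N. (inverse q2 ^ j) ^ i - (- (of_real s ^ 2) * inverse q2 ^ j) ^ i)
      = (\<Sum>j=1..N. (1 - a) * t ^ j)"
    by (simp only: a_def power_mult_distrib swap left_diff_distrib mult_1)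
  also have "\<dots> = (1 - a) * ((t - t ^ Suc N) / (1 - t))"
    using t(1,2) by (simp add: sum_gp flip: sum_distrib_left)
  also have "\<dots> = (1 - t ^ N) * ((a - 1) / (1 - inverse t))"
    using t(1,2) by (simp add: field_simps)
  finally show ?thesis
    unfolding swap[of N] trace_weight_def t(3) a_def by (rule sym)
qed simp

lemma podles_trace_complement:
  "podles_trace s q A + podles_trace s q (1 - rescale (inverse q2 ^ N) A) =
     (\<Sum>j=1..N. poly A (inverse q2 ^ j) - poly A (- (of_real s ^ 2) * inverse q2 ^ j))"
proof -
  let ?r = "inverse q2 ^ N"
  have "degree (1 - rescale ?r A) \<le> degree A"
    using degree_diff_le_max[of 1 "rescale ?r A"] degree_rescale_le[of ?r A] by simp
  then have "podles_trace s q A + podles_trace s q (1 - rescale ?r A) =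
      (\<Sum>i\<le>degree A. (coeff A i + coeff (1 - rescale ?r A) i) * trace_weight s q i)"
    by (simp add: podles_trace_upto[of _ "degree A"] distrib_right sum.distrib)
  also have "\<dots> = (\<Sum>i\<le>degree A. coeff A i * ((1 - ?r ^ i) * trace_weight s q i))"
  proof (intro sum.cong refl)
    fix i
    show "(coeff A i + coeff (1 - rescale ?r A) i) * trace_weight s q i =
        coeff A i * ((1 - ?r ^ i) * trace_weight s q i)"
      by (cases "i = 0") (simp_all add: coeff_rescale coeff_1 algebra_simps)
  qed
  also have "\<dots> = (\<Sum>i\<le>degree A. \<Sum>j=1..N. coeff A i * (inverse q2 ^ j) ^ i
      - coeff A i * (- (of_real s ^ 2) * inverse q2 ^ j) ^ i)"
    by (simp add: trace_weight_telescope sum_distrib_left right_diff_distrib)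
  also have "\<dots> = (\<Sum>j=1..N. poly A (inverse q2 ^ j) - poly A (- (of_real s ^ 2) * inverse q2 ^ j))"
    by (subst sum.swap) (simp add: poly_altdef sum_subtractf)
  finally show ?thesis .
qed
end

section \<open>The inclusion of B into O(SU_q(2))\<close>

text \<open>\<open>K\<close> is self-adjoint, so \<open>KgS\<close> is sent to \<open>K\<close> as well.\<close>

fun gen_img :: "real \<Rightarrow> real \<Rightarrow> bgen \<Rightarrow> hgen free_alg" where
  "gen_img s q Kg = Kh s"
| "gen_img s q KgS = Kh s"
| "gen_img s q Lg = Lh s q"
| "gen_img s q LgS = Lh_adj s q"

lemma bgen_img_eq: "bgen_img s q x = lookup (gen_img s q x)"
  by (cases x) (auto simp: fun_eq_iff Kel_def Kh_def Lel_def Lh_def Lh_adj_def nc_add_def nc_sub_def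
      nc_smult_def nc_mono_def nc_star_def lookup_free_simps rev_map_hstar_eq hstar_eq)

definition bincl_hom :: "real \<Rightarrow> real \<Rightarrow> bgen free_alg \<Rightarrow> hgen free_alg" where
  "bincl_hom s q F = (\<Sum>w\<in>Poly_Mapping.keys F. scalar (lookup F w) * prod_list (map (gen_img s q) w))"

lemma bincl_lookup: "bincl s q (lookup F) = lookup (bincl_hom s q F)"
proof -
  have "bword_img s q w = lookup (prod_list (map (gen_img s q) w))" for w
    by (induction w) (simp_all add: bword_img_def lookup_one_nc lookup_times bgen_img_eq)
  then show ?thesis
    by (simp add: fun_eq_iff bincl_def bincl_hom_def lookup_sum lookup_scalar_mult keys.rep_eq)
qed

lemma bincl_hom_superset:
  "finite S \<Longrightarrow> Poly_Mapping.keys F \<subseteq> S \<Longrightarrow>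
    bincl_hom s q F = (\<Sum>w\<in>S. scalar (lookup F w) * prod_list (map (gen_img s q) w))"
  unfolding bincl_hom_def by (rule sum.mono_neutral_left) (auto simp: in_keys_iff)

lemma bincl_hom_add: "bincl_hom s q (F + G) = bincl_hom s q F + bincl_hom s q G"
proof -
  let ?S = "Poly_Mapping.keys F \<union> Poly_Mapping.keys G"
  have "bincl_hom s q (F + G) = (\<Sum>w\<in>?S. scalar (lookup (F + G) w) * prod_list (map (gen_img s q) w))"
    by (rule bincl_hom_superset) (auto simp: keys_add)
  also have "\<dots> = bincl_hom s q F + bincl_hom s q G"
    by (simp add: bincl_hom_superset[of ?S] lookup_add single_add distrib_right sum.distrib)
  finally show ?thesis .
qed

lemma bincl_hom_0 [simp]: "bincl_hom s q 0 = 0"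
  by (simp add: bincl_hom_def)

lemma bincl_hom_sum: "bincl_hom s q (\<Sum>i\<in>I. F i) = (\<Sum>i\<in>I. bincl_hom s q (F i))"
  by (induction I rule: infinite_finite_induct) (simp_all add: bincl_hom_add)

lemma bincl_hom_single: "bincl_hom s q (single w c) = scalar c * prod_list (map (gen_img s q) w)"
  by (cases "c = 0") (simp_all add: bincl_hom_def)

lemma bincl_hom_mult: "bincl_hom s q (F * G) = bincl_hom s q F * bincl_hom s q G"
proof -
  let ?w = "\<lambda>w. prod_list (map (gen_img s q) w)"
  have factor: "scalar (a * b) * (U * V) = (scalar a * U) * (scalar b * V)" for a b U V
    by (metis mult.assoc scalar_left_commute scalar_mult_left)
  have "bincl_hom s q (F * G) = (\<Sum>u\<in>Poly_Mapping.keys F. \<Sum>v\<in>Poly_Mapping.keys G.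
      scalar (lookup F u * lookup G v) * (?w u * ?w v))"
    by (simp add: free_alg_mult_expand bincl_hom_sum bincl_hom_single)
  also have "\<dots> = bincl_hom s q F * bincl_hom s q G"
    by (simp add: factor bincl_hom_def sum_product)
  finally show ?thesis .
qed

lemma bincl_hom_scalar: "bincl_hom s q (scalar c) = scalar c"
  by (simp add: bincl_hom_single)

lemma bincl_hom_power: "bincl_hom s q (F ^ n) = bincl_hom s q F ^ n"
  by (induction n) (simp_all add: bincl_hom_mult bincl_hom_scalar flip: scalar_one)

lemma bincl_hom_alg_poly: "bincl_hom s q (alg_poly p F) = alg_poly p (bincl_hom s q F)"
  by (induction p) (simp_all add: alg_poly_pCons bincl_hom_add bincl_hom_mult bincl_hom_scalar)

lemma bincl_hom_letter: "bincl_hom s q (single [x] 1) = gen_img s q x"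
  by (simp add: bincl_hom_single scalar_one)

section \<open>The counit and the trace on polynomials in K\<close>

lemma hcounit_lookup: "hcounit (lookup X) = lin_ext (\<lambda>w. prod_list (map eps_gen w)) X"
  by (simp add: hcounit_def lin_ext_def keys.rep_eq)

lemma hcounit_Kh: "hcounit (lookup (Kh s)) = 0"
  by (simp add: hcounit_lookup Kh_def lin_ext_add lin_ext_single)

lemma hcounit_bincl_alg_poly_K:
  "hcounit (bincl s q (lookup (alg_poly p (single [Kg] 1)))) = coeff p 0"
proof -
  have "hcounit (bincl s q (lookup (alg_poly p (single [Kg] 1)))) =
      lin_ext (\<lambda>w. prod_list (map eps_gen w)) (alg_poly p (Kh s))"
    by (simp add: bincl_lookup bincl_hom_alg_poly bincl_hom_letter hcounit_lookup)
  also have "\<dots> = poly p 0"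
    using hcounit_Kh[of s] by (simp add: lin_ext_alg_poly hcounit_lookup)
  finally show ?thesis by (simp add: poly_0_coeff_0)
qed

definition diag_mat :: "(nat \<Rightarrow> complex) \<Rightarrow> imat" where
  "diag_mat d = (\<lambda>m n. if m = n then d n else 0)"

lemma mat_mult_diag_mat: "mat_mult (diag_mat d) (diag_mat e) = diag_mat (\<lambda>n. d n * e n)"
proof (intro ext)
  fix m n
  have "infsum (\<lambda>k. diag_mat d m k * diag_mat e k n) UNIV = infsum (\<lambda>k. diag_mat d m k * diag_mat e k n) {m}"
    by (rule infsum_cong_neutral) (auto simp: diag_mat_def)
  then show "mat_mult (diag_mat d) (diag_mat e) m n = diag_mat (\<lambda>n. d n * e n) m n"
    by (simp add: mat_mult_def diag_mat_def)
qed

lemma rep_word_diag_mat_power: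
  "rep_word (diag_mat d) TL (replicate i Kg) = diag_mat (\<lambda>n. d n ^ i)"
  by (induction i) (simp_all add: rep_word_def mat_id_def diag_mat_def[symmetric] mat_mult_diag_mat)

lemma rep_diag_alg_poly_K:
  "rep (diag_mat d) TL (lookup (alg_poly p (single [Kg] 1))) n n = poly p (d n)"
proof -
  have "rep (diag_mat d) TL (lookup (alg_poly p (single [Kg] 1))) n n =
      lin_ext (\<lambda>w. rep_word (diag_mat d) TL w n n) (alg_poly p (single [Kg] 1))"
    by (simp add: rep_def lin_ext_def keys.rep_eq)
  also have "\<dots> = poly p (d n)"
    by (rule lin_ext_alg_poly_single_letter) (simp only: rep_word_diag_mat_power, simp add: diag_mat_def)
  finally show ?thesis .
qed

lemma (in podles_sphere_trace) trpi_alg_poly_K: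
  "trpi s q (lookup (alg_poly p (single [Kg] 1))) = podles_trace s q p"
proof -
  have "piK_minus s q = diag_mat (\<lambda>n. complex_of_real (- (s ^ 2 * q ^ (2 * n))))"
    and "piK_plus s q = diag_mat (\<lambda>n. complex_of_real (q ^ (2 * n)))"
    by (simp_all only: piK_minus_def piK_plus_def diag_mat_def)
  then show ?thesis
    unfolding trpi_def pi_minus_def pi_plus_def
    by (simp only: rep_diag_alg_poly_K) (rule infsumI[OF has_sum_podles_trace])
qed

lemma hcounit_bincl_1: "hcounit (bincl s q (lookup 1)) = 1"
  using hcounit_bincl_alg_poly_K[of s q 1] by (simp add: alg_poly_1)

lemma (in podles_sphere_trace) trpi_1: "trpi s q (lookup 1) = 0"
  using trpi_alg_poly_K[of 1] by (simp add: alg_poly_1)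

section \<open>Idempotent matrices over B\<close>

lemma B_idempotent_of_idempotent_mod:
  assumes "idempotent_mod q n (\<lambda>i j. bincl_hom s q (F i j))"
  shows "B_idempotent s q n (\<lambda>i j. lookup (F i j))"
  unfolding B_idempotent_def
proof (intro conjI allI impI)
  fix i j assume ij: "i < n" "j < n"
  show "fin_supp (lookup (F i j))"
    by (simp add: fin_supp_def)
  have "nc_sub (\<lambda>w. \<Sum>k<n. nc_mult (bincl s q (lookup (F i k))) (bincl s q (lookup (F k j))) w)
      (bincl s q (lookup (F i j))) =
      lookup ((\<Sum>k<n. bincl_hom s q (F i k) * bincl_hom s q (F k j)) - bincl_hom s q (F i j))"
    by (simp add: fun_eq_iff nc_sub_def bincl_lookup lookup_minus lookup_sum lookup_times)
  then show "nc_sub (\<lambda>w. \<Sum>k<n. nc_mult (bincl s q (lookup (F i k))) (bincl s q (lookup (F k j))) w)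
      (bincl s q (lookup (F i j))) \<in> suq_ideal q"
    using assms ij rel_ideal_sound by (simp add: idempotent_mod_def hcong_def)
qed

definition block_pad :: "nat \<Rightarrow> (nat \<Rightarrow> nat \<Rightarrow> 'a::{zero,one}) \<Rightarrow> nat \<Rightarrow> nat \<Rightarrow> 'a" where
  "block_pad k P i j = (if i < k \<and> j < k then P i j else if i = j then 1 else 0)"

lemma idempotent_mod_block_pad:
  assumes "idempotent_mod q k P" and "k \<le> n"
  shows "idempotent_mod q n (block_pad k P)"
  unfolding idempotent_mod_def
proof (intro allI impI)
  fix i j assume ij: "i < n" "j < n"
  show "hcong q (\<Sum>l<n. block_pad k P i l * block_pad k P l j) (block_pad k P i j)"
  proof (cases "i < k \<and> j < k")
    case True
    have "(\<Sum>l<n. block_pad k P i l * block_pad k P l j) = (\<Sum>l<k. P i l * P l j)"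
      by (rule sum.mono_neutral_cong_right) (use True assms(2) in \<open>auto simp: block_pad_def\<close>)
    then show ?thesis
      using assms(1) True by (simp add: idempotent_mod_def block_pad_def)
  next
    case False
    have "(\<Sum>l<n. block_pad k P i l * block_pad k P l j) = block_pad k P i j"
    proof (cases "j < k")
      case True
      then have "block_pad k P i l = (if i = l then 1 else 0)" for l
        using False by (auto simp: block_pad_def)
      then have "(\<Sum>l<n. block_pad k P i l * block_pad k P l j) = (\<Sum>l<n. if i = l then block_pad k P l j else 0)"
        by (intro sum.cong) auto
      then show ?thesis
        using ij by simp
    next
      case False
      then have "block_pad k P l j = (if l = j then 1 else 0)" for l
        by (auto simp: block_pad_def)
      then have "(\<Sum>l<n. block_pad k P i l * block_pad k P l j) = (\<Sum>l<n. if l = j then block_pad k P i l else 0)"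
        by (intro sum.cong) auto
      then show ?thesis
        using ij by simp
    qed
    then show ?thesis by simp
  qed
qed

lemma sum_block_pad_diag:
  fixes f :: "'a::{zero,one} \<Rightarrow> 'b::semiring_1"
  assumes "k \<le> n"
  shows "(\<Sum>i<n. f (block_pad k P i i)) = (\<Sum>i<k. f (P i i)) + of_nat (n - k) * f 1"
proof -
  have "(\<Sum>i<n. f (block_pad k P i i)) = (\<Sum>i<k. f (block_pad k P i i)) + (\<Sum>i=k..<n. f (block_pad k P i i))"
    using assms by (simp add: lessThan_atLeast0 sum.atLeastLessThan_concat)
  then show ?thesis
    by (simp add: block_pad_def)
qed

lemma bincl_hom_block_pad:
  "bincl_hom s q (block_pad k F i j) = block_pad k (\<lambda>i j. bincl_hom s q (F i j)) i j"
  using bincl_hom_scalar[of s q 1] by (simp add: block_pad_def scalar_one)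

context podles_sphere_trace
begin

lemma podles_projection:
  obtains P :: "nat \<Rightarrow> nat \<Rightarrow> bgen free_alg"
  where "idempotent_mod q 2 (\<lambda>i j. bincl_hom s q (P i j))"
    and "(\<Sum>i<2. hcounit (bincl s q (lookup (P i i)))) = 1"
    and "(\<Sum>i<2. trpi s q (lookup (P i i))) = of_int b"
proof -
  define N where "N = nat \<bar>b\<bar>"
  obtain A W where AW: "A * (1 - A) = W * podles_poly_prod s q N"
    and jumps: "(\<Sum>j=1..N. poly A (inverse q2 ^ j) - poly A (- (of_real s ^ 2) * inverse q2 ^ j)) = of_int b"
    unfolding N_def by (rule poly_with_jump_sum)
  define r where "r = inverse q2 ^ N"
  define P where "P = block2 (alg_poly A (single [Kg] 1)) (single [Lg] 1 ^ N)
    (alg_poly (rescale r W) (single [Kg] 1) * single [LgS] 1 ^ N) (alg_poly (1 - rescale r A) (single [Kg] 1))"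
  show thesis
  proof
    have "(\<lambda>i j. bincl_hom s q (P i j)) =
        block2 (alg_poly A K) (L ^ N) (alg_poly (rescale r W) K * Ls ^ N) (alg_poly (1 - rescale r A) K)"
      by (simp add: fun_eq_iff P_def block2_def bincl_hom_mult bincl_hom_power bincl_hom_alg_poly
          bincl_hom_letter)
    then show "idempotent_mod q 2 (\<lambda>i j. bincl_hom s q (P i j))"
      using podles_block_idempotent[OF AW] by (simp add: r_def)
    show "(\<Sum>i<2. hcounit (bincl s q (lookup (P i i)))) = 1"
      by (simp add: P_def block2_def numeral_2_eq_2 hcounit_bincl_alg_poly_K coeff_rescale)
    show "(\<Sum>i<2. trpi s q (lookup (P i i))) = of_int b"
      using podles_trace_complement[of A N] jumps
      by (simp add: P_def block2_def numeral_2_eq_2 trpi_alg_poly_K r_def)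
  qed
qed

end

theorem corollary3p4:
  fixes q s :: real
  assumes "0 < q" and "q < 1" and "0 \<le> s" and "s \<le> 1"
  shows "\<forall>a b :: int. a \<ge> 1 \<longrightarrow>
           (\<exists>(n::nat) (E :: nat \<Rightarrow> nat \<Rightarrow> bgen ncpoly).
              B_idempotent s q n E \<and>
              (\<Sum>i<n. hcounit (bincl s q (E i i))) = of_int a \<and>
              (\<Sum>i<n. trpi s q (E i i)) = of_int b)"
proof (intro allI impI)
  fix a b :: int
  assume "a \<ge> 1"
  interpret podles_sphere_trace s q
    using assms(1,2) by unfold_locales auto
  obtain P where idem: "idempotent_mod q 2 (\<lambda>i j. bincl_hom s q (P i j))"
    and counit: "(\<Sum>i<2. hcounit (bincl s q (lookup (P i i)))) = 1"
    and trace: "(\<Sum>i<2. trpi s q (lookup (P i i))) = of_int b"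
    by (rule podles_projection)
  define n where "n = nat a + 1"
  have "2 \<le> n" using \<open>a \<ge> 1\<close> by (simp add: n_def)
  let ?E = "\<lambda>i j. lookup (block_pad 2 P i j)"
  have "B_idempotent s q n ?E"
    using idempotent_mod_block_pad[OF idem \<open>2 \<le> n\<close>]
    by (intro B_idempotent_of_idempotent_mod) (simp add: bincl_hom_block_pad)
  moreover have "(\<Sum>i<n. hcounit (bincl s q (?E i i))) = of_int a"
    using sum_block_pad_diag[OF \<open>2 \<le> n\<close>, of "\<lambda>F. hcounit (bincl s q (lookup F))" P] counit \<open>a \<ge> 1\<close>
    by (simp add: hcounit_bincl_1 n_def of_nat_diff)
  moreover have "(\<Sum>i<n. trpi s q (?E i i)) = of_int b"
    using sum_block_pad_diag[OF \<open>2 \<le> n\<close>, of "\<lambda>F. trpi s q (lookup F)" P] trace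
    by (simp add: trpi_1)
  ultimately show "\<exists>n E. B_idempotent s q n E \<and> (\<Sum>i<n. hcounit (bincl s q (E i i))) = of_int a \<and>
      (\<Sum>i<n. trpi s q (E i i)) = of_int b"
    by blast
qed

end
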